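(* Let $({\cal A},* )$ be a real quantum group (a $*$-Hopf algebra with coproduct $\Delta$, antipode $S$), let $\tau=*\circ S$, and let $g:{\cal A}\rightarrow{\bf C}$ be a character, i.e. a $*$-homomorphism of ${\cal A}$ into ${\bf C}$. Define ${\rm Ad}_g\,x=\sum_{(x)}g(S(x_{(1)}))\,g(x_{(3)})\,x_{(2)}$ for $x\in{\cal A}$. Let $r:{\cal A}\rightarrow{\cal K}$ be the projection that defines a right coisotropic quantum subgroup ${\cal K}$ of ${\cal A}$, and let $r_g[x]=r[{\rm Ad}_g^{-1}\,x]$, $x\in{\cal A}$. Then ${\rm Ker}\,r_g={\rm Ad}_g\,{\rm Ker}\,r$ is a $\tau$-invariant right ideal and two-sided coideal of ${\cal A}$, and it determines a right coisotropic quantum subgroup ${\cal K}_g$. The corresponding homogeneous space $B^{r_g}=\{a\in{\cal A}\,|\,({\rm id}\otimes r_g)\Delta a=a\otimes r_g(1)\}$ equals ${\rm Ad}_g\,B^r$, where $B^r=\{a\in{\cal A}\,|\,({\rm id}\otimes r)\Delta a=a\otimes r(1)\}$, and $B^{r_g}$ is isomorphic to $B^r$ as a left comodule algebra.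
   Context: A real coisotropic quantum right subgroup $({\cal K},\tau_{\cal K})$ of a real quantum group $({\cal A},* )$ is a coalgebra and right ${\cal A}$-module ${\cal K}$ such that (i) there is a surjective linear map $r:{\cal A}\rightarrow{\cal K}$ which is a morphism of coalgebras and of right ${\cal A}$-modules (with ${\cal A}$ a module over itself via multiplication), and (ii) there is an antilinear map $\tau_{\cal K}:{\cal K}\rightarrow{\cal K}$ with $\tau_{\cal K}\circ r=r\circ\tau$, where $\tau=*\circ S$. Such subgroups correspond bijectively to $\tau$-invariant two-sided coideals that are right ideals in ${\cal A}$ (via ${\cal K}={\cal A}/{\rm Ker}\,r$). *)

theory Defs
  imports Complex_Main
begin

text \<open>Elements of an algebraic tensor product V (x) W are represented by finite lists of
  pairs (v_i, w_i), standing for the sum of the simple tensors v_i (x) w_i.  Two such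
  representatives denote the same tensor iff all products of linear functionals agree on
  them (linear functionals of the form f (x) g separate the points of V (x) W over a
  field).\<close>

definition lfunc :: "(complex \<Rightarrow> 'v::ab_group_add \<Rightarrow> 'v) \<Rightarrow> ('v \<Rightarrow> complex) \<Rightarrow> bool" where
  "lfunc sc f \<longleftrightarrow> Vector_Spaces.linear sc (*) f"

definition teq2 :: "(complex \<Rightarrow> 'v::ab_group_add \<Rightarrow> 'v) \<Rightarrow> (complex \<Rightarrow> 'w::ab_group_add \<Rightarrow> 'w)
    \<Rightarrow> ('v \<times> 'w) list \<Rightarrow> ('v \<times> 'w) list \<Rightarrow> bool" where
  "teq2 sv sw l1 l2 \<longleftrightarrow>
     (\<forall>f g. lfunc sv f \<and> lfunc sw g \<longrightarrow>
        (\<Sum>(a,b)\<leftarrow>l1. f a * g b) = (\<Sum>(a,b)\<leftarrow>l2. f a * g b))"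

definition teq3 :: "(complex \<Rightarrow> 'v::ab_group_add \<Rightarrow> 'v) \<Rightarrow> (complex \<Rightarrow> 'w::ab_group_add \<Rightarrow> 'w)
    \<Rightarrow> (complex \<Rightarrow> 'u::ab_group_add \<Rightarrow> 'u)
    \<Rightarrow> ('v \<times> 'w \<times> 'u) list \<Rightarrow> ('v \<times> 'w \<times> 'u) list \<Rightarrow> bool" where
  "teq3 sv sw su l1 l2 \<longleftrightarrow>
     (\<forall>f g h. lfunc sv f \<and> lfunc sw g \<and> lfunc su h \<longrightarrow>
        (\<Sum>(a,b,c)\<leftarrow>l1. f a * g b * h c) = (\<Sum>(a,b,c)\<leftarrow>l2. f a * g b * h c))"

definition coalgebra :: "(complex \<Rightarrow> 'c::ab_group_add \<Rightarrow> 'c) \<Rightarrow> ('c \<Rightarrow> ('c \<times> 'c) list)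
    \<Rightarrow> ('c \<Rightarrow> complex) \<Rightarrow> bool" where
  "coalgebra sc cop eps \<longleftrightarrow>
     vector_space sc \<and> lfunc sc eps \<and>
     (\<forall>x y. teq2 sc sc (cop (x + y)) (cop x @ cop y)) \<and>
     (\<forall>c x. teq2 sc sc (cop (sc c x)) (map (\<lambda>(u,v). (sc c u, v)) (cop x))) \<and>
     (\<forall>x. teq3 sc sc sc
            (concat (map (\<lambda>(u,v). map (\<lambda>(p,q). (p,q,v)) (cop u)) (cop x)))
            (concat (map (\<lambda>(u,v). map (\<lambda>(p,q). (u,p,q)) (cop v)) (cop x)))) \<and>
     (\<forall>x. (\<Sum>(u,v)\<leftarrow>cop x. sc (eps u) v) = x) \<and>
     (\<forall>x. (\<Sum>(u,v)\<leftarrow>cop x. sc (eps v) u) = x)"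

text \<open>The Hopf algebra A is the whole type 'a (a ring with unit), with complex scalar
  multiplication sc, involution st (the *-operation), coproduct cop, counit eps and
  antipode S.\<close>

definition real_quantum_group :: "(complex \<Rightarrow> 'a::ring_1 \<Rightarrow> 'a) \<Rightarrow> ('a \<Rightarrow> 'a)
    \<Rightarrow> ('a \<Rightarrow> ('a \<times> 'a) list) \<Rightarrow> ('a \<Rightarrow> complex) \<Rightarrow> ('a \<Rightarrow> 'a) \<Rightarrow> bool" where
  "real_quantum_group sc st cop eps S \<longleftrightarrow>
     coalgebra sc cop eps \<and>
     \<comment> \<open>associative unital complex algebra\<close>
     (\<forall>c x y. sc c (x * y) = sc c x * y \<and> sc c (x * y) = x * sc c y) \<and>
     \<comment> \<open>coproduct and counit are unital algebra homomorphisms\<close>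
     (\<forall>x y. teq2 sc sc (cop (x * y))
              (concat (map (\<lambda>(a,b). map (\<lambda>(c,d). (a * c, b * d)) (cop y)) (cop x)))) \<and>
     teq2 sc sc (cop 1) [(1, 1)] \<and>
     (\<forall>x y. eps (x * y) = eps x * eps y) \<and> eps 1 = 1 \<and>
     \<comment> \<open>antipode\<close>
     Vector_Spaces.linear sc sc S \<and>
     (\<forall>x. (\<Sum>(u,v)\<leftarrow>cop x. S u * v) = sc (eps x) 1) \<and>
     (\<forall>x. (\<Sum>(u,v)\<leftarrow>cop x. u * S v) = sc (eps x) 1) \<and>
     \<comment> \<open>*-structure: antilinear, antimultiplicative involution, compatible with coproduct\<close>
     (\<forall>x y. st (x + y) = st x + st y) \<and>
     (\<forall>c x. st (sc c x) = sc (cnj c) (st x)) \<and>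
     (\<forall>x y. st (x * y) = st y * st x) \<and>
     (\<forall>x. st (st x) = x) \<and>
     (\<forall>x. teq2 sc sc (cop (st x)) (map (\<lambda>(u,v). (st u, st v)) (cop x)))"

definition tau :: "('a \<Rightarrow> 'a) \<Rightarrow> ('a \<Rightarrow> 'a) \<Rightarrow> 'a \<Rightarrow> 'a" where
  "tau st S = st \<circ> S"

definition character :: "(complex \<Rightarrow> 'a::ring_1 \<Rightarrow> 'a) \<Rightarrow> ('a \<Rightarrow> 'a) \<Rightarrow> ('a \<Rightarrow> complex) \<Rightarrow> bool" where
  "character sc st g \<longleftrightarrow>
     lfunc sc g \<and> (\<forall>x y. g (x * y) = g x * g y) \<and> g 1 = 1 \<and>
     (\<forall>x. g (st x) = cnj (g x))"

text \<open>Ad_g x = sum g(S x_(1)) g(x_(3)) x_(2), with (Delta (x) id) Delta x used for the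
  iterated coproduct.\<close>
definition Ad :: "(complex \<Rightarrow> 'a::ring_1 \<Rightarrow> 'a) \<Rightarrow> ('a \<Rightarrow> ('a \<times> 'a) list) \<Rightarrow> ('a \<Rightarrow> 'a)
    \<Rightarrow> ('a \<Rightarrow> complex) \<Rightarrow> 'a \<Rightarrow> 'a" where
  "Ad sc cop S g x = (\<Sum>(u,v)\<leftarrow>cop x. \<Sum>(p,q)\<leftarrow>cop u. sc (g (S p) * g v) q)"

definition real_coisotropic_right_qsubgroup ::
  "(complex \<Rightarrow> 'a::ring_1 \<Rightarrow> 'a) \<Rightarrow> ('a \<Rightarrow> 'a) \<Rightarrow> ('a \<Rightarrow> ('a \<times> 'a) list) \<Rightarrow> ('a \<Rightarrow> complex)
   \<Rightarrow> ('a \<Rightarrow> 'a)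
   \<Rightarrow> (complex \<Rightarrow> 'k::ab_group_add \<Rightarrow> 'k) \<Rightarrow> ('k \<Rightarrow> ('k \<times> 'k) list) \<Rightarrow> ('k \<Rightarrow> complex)
   \<Rightarrow> ('k \<Rightarrow> 'a \<Rightarrow> 'k) \<Rightarrow> ('k \<Rightarrow> 'k) \<Rightarrow> ('a \<Rightarrow> 'k) \<Rightarrow> bool" where
  "real_coisotropic_right_qsubgroup sc st cop eps S scK copK epsK act tauK r \<longleftrightarrow>
     coalgebra scK copK epsK \<and>
     \<comment> \<open>K is a right A-module\<close>
     (\<forall>a. Vector_Spaces.linear scK scK (\<lambda>k. act k a)) \<and>
     (\<forall>k. Vector_Spaces.linear sc scK (act k)) \<and>
     (\<forall>k. act k 1 = k) \<and> (\<forall>k a b. act (act k a) b = act k (a * b)) \<and>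
     \<comment> \<open>r: surjective linear map, morphism of coalgebras and right A-modules\<close>
     Vector_Spaces.linear sc scK r \<and> surj r \<and>
     (\<forall>x. teq2 scK scK (copK (r x)) (map (\<lambda>(u,v). (r u, r v)) (cop x))) \<and>
     (\<forall>x. epsK (r x) = eps x) \<and>
     (\<forall>x y. r (x * y) = act (r x) y) \<and>
     \<comment> \<open>tau_K antilinear with tau_K o r = r o tau\<close>
     (\<forall>k l. tauK (k + l) = tauK k + tauK l) \<and>
     (\<forall>c k. tauK (scK c k) = scK (cnj c) (tauK k)) \<and>
     (\<forall>x. tauK (r x) = r (tau st S x))"

definition cspace :: "(complex \<Rightarrow> 'v::ab_group_add \<Rightarrow> 'v) \<Rightarrow> 'v set \<Rightarrow> bool" where
  "cspace sc I \<longleftrightarrow> 0 \<in> I \<and> (\<forall>x\<in>I. \<forall>y\<in>I. x + y \<in> I) \<and> (\<forall>c. \<forall>x\<in>I. sc c x \<in> I)"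

definition right_ideal :: "(complex \<Rightarrow> 'a::ring_1 \<Rightarrow> 'a) \<Rightarrow> 'a set \<Rightarrow> bool" where
  "right_ideal sc I \<longleftrightarrow> cspace sc I \<and> (\<forall>x\<in>I. \<forall>y. x * y \<in> I)"

text \<open>Two-sided coideal: a subspace I with eps(I) = 0 and Delta(I) contained in
  I (x) A + A (x) I.\<close>
definition two_sided_coideal :: "(complex \<Rightarrow> 'a::ab_group_add \<Rightarrow> 'a) \<Rightarrow> ('a \<Rightarrow> ('a \<times> 'a) list)
    \<Rightarrow> ('a \<Rightarrow> complex) \<Rightarrow> 'a set \<Rightarrow> bool" where
  "two_sided_coideal sc cop eps I \<longleftrightarrow> cspace sc I \<and> (\<forall>x\<in>I. eps x = 0) \<and>
     (\<forall>x\<in>I. \<exists>l. teq2 sc sc (cop x) l \<and> (\<forall>(u,v)\<in>set l. u \<in> I \<or> v \<in> I))"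

definition ker :: "('a \<Rightarrow> 'k::zero) \<Rightarrow> 'a set" where
  "ker r = {x. r x = 0}"

definition hom_space :: "(complex \<Rightarrow> 'a::ring_1 \<Rightarrow> 'a) \<Rightarrow> ('a \<Rightarrow> ('a \<times> 'a) list)
    \<Rightarrow> (complex \<Rightarrow> 'k::ab_group_add \<Rightarrow> 'k) \<Rightarrow> ('a \<Rightarrow> 'k) \<Rightarrow> 'a set" where
  "hom_space sc cop scK r = {a. teq2 sc scK (map (\<lambda>(u,v). (u, r v)) (cop a)) [(a, r 1)]}"

text \<open>Isomorphism of left A-comodule algebras B -> B' (B, B' unital subalgebras of A
  with left coaction the restriction of Delta): a bijection which is a unital algebra
  homomorphism and intertwines the coactions, Delta(phi b) = (id (x) phi) Delta b.\<close>
definition left_comod_alg_iso :: "(complex \<Rightarrow> 'a::ring_1 \<Rightarrow> 'a) \<Rightarrow> ('a \<Rightarrow> ('a \<times> 'a) list)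
    \<Rightarrow> 'a set \<Rightarrow> 'a set \<Rightarrow> ('a \<Rightarrow> 'a) \<Rightarrow> bool" where
  "left_comod_alg_iso sc cop B B' phi \<longleftrightarrow>
     bij_betw phi B B' \<and>
     (\<forall>x\<in>B. \<forall>y\<in>B. phi (x + y) = phi x + phi y \<and> phi (x * y) = phi x * phi y) \<and>
     (\<forall>c. \<forall>x\<in>B. phi (sc c x) = sc c (phi x)) \<and> phi 1 = 1 \<and>
     (\<forall>b\<in>B. \<exists>l. teq2 sc sc (cop b) l \<and> (\<forall>(u,v)\<in>set l. v \<in> B) \<and>
              teq2 sc sc (cop (phi b)) (map (\<lambda>(u,v). (u, phi v)) l))"

end

theory Submission
  imports Defs
begin

text \<open>Everything is proved dually: an element of the Hopf algebra is determined by the values of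
  all linear functionals on it, and the coproduct makes the functionals a convolution algebra. There
  Ad_g acts as h \<mapsto> g\<inverse> * h * g with g\<inverse> = g \<circ> S, so its inverse is
  x \<mapsto> \<Sum> g(x_(1)) x_(2) g\<inverse>(x_(3)), a composite of a left and a right translation by
  characters. Hence Ad_g\<inverse> is an algebra map, a coalgebra map and (as S is an anti-coalgebra map
  and g a *-character) commutes with \<tau>. Precomposing r with Ad_g\<inverse> therefore preserves every
  defining property of a coisotropic quantum subgroup, and transports kernel and homogeneous space
  along Ad_g. The left comodule algebra isomorphism B^r \<rightarrow> B^r_g is not Ad_g but the right
  translation b \<mapsto> \<Sum> b_(1) g(b_(2)), which is multiplicative and left colinear.\<close>

section \<open>Linear functionals and algebraic tensors\<close>

lemmas linear_map_add = module_hom.add[OF module_hom_iff_linear[THEN iffD2]]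
  and linear_map_scale = module_hom.scale[OF module_hom_iff_linear[THEN iffD2]]
  and linear_map_0 = module_hom.zero[OF module_hom_iff_linear[THEN iffD2]]
  and linear_map_diff = module_hom.diff[OF module_hom_iff_linear[THEN iffD2]]
  and linear_map_sum = module_hom.sum[OF module_hom_iff_linear[THEN iffD2]]

lemma linear_map_sum_list:
  "Vector_Spaces.linear s1 s2 f \<Longrightarrow> f (\<Sum>x\<leftarrow>xs. h x) = (\<Sum>x\<leftarrow>xs. f (h x))"
  by (induction xs) (auto simp: linear_map_0 linear_map_add)

lemma sum_list_map_cong: "(\<And>x. x \<in> set xs \<Longrightarrow> f x = g x) \<Longrightarrow> (\<Sum>x\<leftarrow>xs. f x) = (\<Sum>x\<leftarrow>xs. g x)"
  by (metis map_cong)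

lemma vector_space_complex: "vector_space ((*) :: complex \<Rightarrow> complex \<Rightarrow> complex)"
  by unfold_locales (auto simp: algebra_simps)

lemma lfunc_vector_space: "lfunc s f \<Longrightarrow> vector_space s"
  by (simp add: lfunc_def Vector_Spaces.linear_iff)

lemma lfuncI:
  "vector_space s \<Longrightarrow> (\<And>x y. f (x + y) = f x + f y) \<Longrightarrow> (\<And>c x. f (s c x) = c * f x) \<Longrightarrow> lfunc s f"
  using vector_space_complex by (simp add: lfunc_def Vector_Spaces.linear_iff)

lemma
  assumes "lfunc s f"
  shows lfunc_add: "f (x + y) = f x + f y"
    and lfunc_scale: "f (s c x) = c * f x"
    and lfunc_0: "f 0 = 0"
    and lfunc_diff: "f (x - y) = f x - f y"
    and lfunc_sum_list: "f (\<Sum>x\<leftarrow>xs. h x) = (\<Sum>x\<leftarrow>xs. f (h x))"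
  using assms unfolding lfunc_def
  by (auto simp: linear_map_add linear_map_scale linear_map_0 linear_map_diff linear_map_sum_list)

lemma lfunc_compose: "lfunc s2 f \<Longrightarrow> Vector_Spaces.linear s1 s2 L \<Longrightarrow> lfunc s1 (\<lambda>x. f (L x))"
  unfolding lfunc_def using Vector_Spaces.linear_compose[of s1 s2 L "(*)" f] by (simp add: o_def)

lemma
  assumes "lfunc s f" and "lfunc s h"
  shows lfunc_plus: "lfunc s (\<lambda>x. f x + h x)"
    and lfunc_minus: "lfunc s (\<lambda>x. f x - h x)"
  using assms by (auto intro!: lfuncI simp: lfunc_vector_space lfunc_add lfunc_scale algebra_simps)

lemma
  assumes "lfunc s f"
  shows lfunc_cmult: "lfunc s (\<lambda>x. c * f x)"
    and lfunc_multc: "lfunc s (\<lambda>x. f x * c)"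
  using assms by (auto intro!: lfuncI simp: lfunc_vector_space lfunc_add lfunc_scale algebra_simps)

lemma lfunc_sum_list_closed:
  "vector_space s \<Longrightarrow> (\<And>i. lfunc s (F i)) \<Longrightarrow> lfunc s (\<lambda>x. \<Sum>i\<leftarrow>l. F i x)"
  by (induction l) (auto intro: lfuncI lfunc_plus)

lemma functional_nonzero:
  assumes "vector_space s" and "x \<noteq> 0"
  obtains f where "lfunc s f" and "f x \<noteq> 0"
proof -
  interpret vector_space_pair s "(*) :: complex \<Rightarrow> complex \<Rightarrow> complex"
    using assms(1) vector_space_complex by (simp add: vector_space_pair_def)
  have "vs1.independent {x}" using assms(2) by simp
  from linear_independent_extend[OF this, of "\<lambda>_. 1"] obtain f where
    "Vector_Spaces.linear s (*) f" "f x = 1" by blast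
  then show ?thesis using that unfolding lfunc_def by simp
qed

lemma eq_by_functionals:
  assumes "vector_space s" and "\<And>f. lfunc s f \<Longrightarrow> f x = f y"
  shows "x = y"
proof (rule ccontr)
  assume "x \<noteq> y"
  then obtain f where "lfunc s f" "f (x - y) \<noteq> 0"
    using functional_nonzero[OF assms(1)] by (metis right_minus_eq)
  then show False using assms(2) by (simp add: lfunc_diff)
qed

lemma linear_by_functionals:
  assumes "vector_space s1" "vector_space s2" and "\<And>h. lfunc s2 h \<Longrightarrow> lfunc s1 (\<lambda>x. h (L x))"
  shows "Vector_Spaces.linear s1 s2 L"
  unfolding Vector_Spaces.linear_iff
proof (intro conjI allI assms(1,2); rule eq_by_functionals[OF assms(2)])
  fix h x y c assume h: "lfunc s2 h"
  note hL = assms(3)[OF h]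
  show "h (L (x + y)) = h (L x + L y)" by (simp add: lfunc_add[OF hL] lfunc_add[OF h])
  show "h (L (s1 c x)) = h (s2 c (L x))" by (simp add: lfunc_scale[OF hL] lfunc_scale[OF h])
qed

locale complex_vector_space = vector_space scale for scale :: "complex \<Rightarrow> 'b::ab_group_add \<Rightarrow> 'b"
begin

lemma finite_coordinates:
  assumes "finite X" and "independent B1" "B1 \<subseteq> span X"
  obtains B c where "finite B" "B1 \<subseteq> B" "independent B" "B \<subseteq> span X"
    "\<forall>x\<in>X. x = (\<Sum>e\<in>B. scale (c x e) e)"
    "\<forall>e\<in>B. \<exists>f. lfunc scale f \<and> (\<forall>x\<in>X. f x = c x e)"
proof -
  obtain B where B: "B1 \<subseteq> B" "B \<subseteq> span X" "independent B" "span X \<subseteq> span B"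
    using maximal_independent_subset_extend[OF assms(3,2)] by blast
  have finB: "finite B" using independent_span_bound[OF assms(1) B(3,2)] by simp
  have "\<forall>x\<in>X. \<exists>u. x = (\<Sum>e\<in>B. scale (u e) e)"
    using B(4) span_superset span_finite[OF finB] by blast
  then obtain c where c: "\<forall>x\<in>X. x = (\<Sum>e\<in>B. scale (c x e) e)" by metis
  interpret vp: vector_space_pair scale "(*) :: complex \<Rightarrow> complex \<Rightarrow> complex"
    using vector_space_complex by (simp add: vector_space_pair_def vector_space_axioms)
  have ex: "\<forall>e\<in>B. \<exists>f. lfunc scale f \<and> (\<forall>x\<in>X. f x = c x e)"
  proof
    fix e assume e: "e \<in> B"
    obtain f where f: "Vector_Spaces.linear scale (*) f" "\<forall>y\<in>B. f y = (if y = e then 1 else 0)"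
      using vp.linear_independent_extend[OF B(3), of "\<lambda>y. if y = e then 1 else 0"] by blast
    have "f x = c x e" if "x \<in> X" for x
    proof -
      have "f x = f (\<Sum>e\<in>B. scale (c x e) e)" using c that by metis
      also have "\<dots> = (\<Sum>e'\<in>B. c x e' * f e')"
        by (simp add: linear_map_sum[OF f(1)] linear_map_scale[OF f(1)])
      also have "\<dots> = (\<Sum>e'\<in>B. if e' = e then c x e' else 0)" using f(2) by (intro sum.cong) auto
      also have "\<dots> = c x e" using e finB by simp
      finally show ?thesis .
    qed
    then show "\<exists>f. lfunc scale f \<and> (\<forall>x\<in>X. f x = c x e)" using f(1) unfolding lfunc_def by blast
  qed
  show ?thesis by (rule that[OF finB B(1,3,2) c ex])
qed

lemma sum_list_expand:
  assumes "\<forall>x\<in>fst ` set l. x = (\<Sum>e\<in>B. scale (c x e) e)"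
    and l1: "\<And>b. Vector_Spaces.linear scale su (\<lambda>a. \<Psi> a b)"
    and l2: "\<And>a. Vector_Spaces.linear sw su (\<Psi> a)"
  shows "(\<Sum>(a,b)\<leftarrow>l. \<Psi> a b) = (\<Sum>e\<in>B. \<Psi> e (\<Sum>(a,b)\<leftarrow>l. sw (c a e) b))"
  using assms(1)
proof (induction l)
  case Nil
  then show ?case by (simp add: linear_map_0[OF l2])
next
  case (Cons p l)
  obtain a b where p: "p = (a, b)" by force
  have a: "a = (\<Sum>e\<in>B. scale (c a e) e)" using Cons.prems p by auto
  have "\<Psi> a b = (\<Sum>e\<in>B. \<Psi> e (sw (c a e) b))"
    by (subst a) (simp add: linear_map_sum[OF l1] linear_map_scale[OF l1] linear_map_scale[OF l2])
  moreover have "(\<Sum>(a,b)\<leftarrow>l. \<Psi> a b) = (\<Sum>e\<in>B. \<Psi> e (\<Sum>(a,b)\<leftarrow>l. sw (c a e) b))"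
    using Cons by auto
  ultimately show ?case by (simp add: p linear_map_add[OF l2] sum.distrib)
qed

lemma span_disjoint_complement:
  assumes B: "finite B" "independent B" "B1 \<subseteq> B" and x: "x \<in> span B1" "x \<in> span (B - B1)"
  shows "x = 0"
proof -
  have fin: "finite B1" "finite (B - B1)" using B finite_subset by auto
  obtain u1 where u1: "x = (\<Sum>v\<in>B1. scale (u1 v) v)" using x(1) span_finite[OF fin(1)] by blast
  obtain u2 where u2: "x = (\<Sum>v\<in>B - B1. scale (u2 v) v)" using x(2) span_finite[OF fin(2)] by blast
  define u where "u v = (if v \<in> B1 then u1 v else - u2 v)" for v
  have "(\<Sum>v\<in>B. scale (u v) v) = (\<Sum>v\<in>B1. scale (u v) v) + (\<Sum>v\<in>B - B1. scale (u v) v)"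
    using sum.subset_diff[OF B(3,1)] by (simp add: add.commute)
  also have "(\<Sum>v\<in>B1. scale (u v) v) = x" unfolding u1 by (rule sum.cong) (auto simp: u_def)
  also have "(\<Sum>v\<in>B - B1. scale (u v) v) = - x"
    unfolding u2 by (simp add: u_def scale_minus_left sum_negf)
  finally have "\<forall>v\<in>B. u v = 0" using independentD[OF B(2,1) subset_refl] by simp
  then have "\<forall>v\<in>B1. u1 v = 0" using B(3) unfolding u_def by (metis subsetD)
  then show ?thesis using u1 by simp
qed

text \<open>A linear map is injective on the span of the basis vectors outside a basis of its
  kernel, so their images can be separated by a functional.\<close>

lemma functional_dual_to_image:
  assumes r: "Vector_Spaces.linear scale sk r"
    and B: "finite B" "independent B" "B1 \<subseteq> B" "\<forall>e\<in>B1. r e = 0"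
    and ker: "\<forall>x\<in>span B. r x = 0 \<longrightarrow> x \<in> span B1"
    and e0: "e0 \<in> B - B1"
  obtains \<phi> where "lfunc sk \<phi>" "\<And>e. e \<in> B \<Longrightarrow> \<phi> (r e) = (if e = e0 then 1 else 0)"
proof -
  interpret R: Vector_Spaces.linear scale sk r by fact
  interpret K: vector_space_pair sk "(*) :: complex \<Rightarrow> complex \<Rightarrow> complex"
    using R.vs2.vector_space_axioms vector_space_complex by (simp add: vector_space_pair_def)
  have inj: "inj_on r (span (B - B1))"
    unfolding R.inj_on_iff_eq_0[OF subspace_span]
  proof (intro ballI impI)
    fix x assume x: "x \<in> span (B - B1)" "r x = 0"
    then have "x \<in> span B1" using ker span_mono[of "B - B1" B] by blast
    then show "x = 0" using span_disjoint_complement[OF B(1-3) _ x(1)] by blast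
  qed
  have "R.vs2.independent (r ` (B - B1))"
    by (rule R.independent_injective_image[OF _ inj]) (use B(2) independent_mono in blast)
  then obtain \<phi> where \<phi>: "Vector_Spaces.linear sk (*) \<phi>"
      "\<forall>y\<in>r ` (B - B1). \<phi> y = (if y = r e0 then 1 else 0)"
    using K.linear_independent_extend[of _ "\<lambda>y. if y = r e0 then 1 else 0"] by blast
  have "lfunc sk \<phi>" using \<phi>(1) by (simp add: lfunc_def)
  moreover have "\<phi> (r e) = (if e = e0 then 1 else 0)" if "e \<in> B" for e
  proof (cases "e \<in> B1")
    case True
    then show ?thesis using B(4) e0 linear_map_0[OF \<phi>(1)] by auto
  next
    case False
    have "r e = r e0 \<longleftrightarrow> e = e0"
      using inj_on_eq_iff[OF inj_on_subset[OF inj span_superset]] that False e0 by blast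
    then show ?thesis using \<phi>(2) that False by auto
  qed
  ultimately show ?thesis by (rule that)
qed

end

lemma finite_dual_coordinates:
  assumes "vector_space s" "finite X"
  obtains B c where "finite B" "\<forall>x\<in>X. x = (\<Sum>e\<in>B. s (c x e) e)"
    "\<forall>e\<in>B. \<exists>f. lfunc s f \<and> (\<forall>x\<in>X. f x = c x e)"
proof -
  interpret complex_vector_space s using assms(1) by (simp add: complex_vector_space_def)
  obtain B c where "finite B" "\<forall>x\<in>X. x = (\<Sum>e\<in>B. s (c x e) e)"
      "\<forall>e\<in>B. \<exists>f. lfunc s f \<and> (\<forall>x\<in>X. f x = c x e)"
    by (rule finite_coordinates[OF assms(2) independent_empty empty_subsetI])
  then show ?thesis by (rule that)
qed

lemma teq2D:
  "teq2 sv sw l1 l2 \<Longrightarrow> lfunc sv f \<Longrightarrow> lfunc sw g \<Longrightarrow>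
   (\<Sum>(a,b)\<leftarrow>l1. f a * g b) = (\<Sum>(a,b)\<leftarrow>l2. f a * g b)"
  unfolding teq2_def by blast

lemma teq2_sym: "teq2 sv sw l1 l2 \<Longrightarrow> teq2 sv sw l2 l1"
  unfolding teq2_def by metis

lemma teq2_trans: "teq2 sv sw l1 l2 \<Longrightarrow> teq2 sv sw l2 l3 \<Longrightarrow> teq2 sv sw l1 l3"
  unfolding teq2_def by metis

text \<open>Expand the first legs in coordinates that are restrictions of functionals; the resulting
  second legs are then separated by functionals.\<close>

lemma teq2_bilinear:
  assumes sv: "vector_space sv" and sw: "vector_space sw"
    and t: "teq2 sv sw l1 l2"
    and l1: "\<And>b. Vector_Spaces.linear sv su (\<lambda>a. \<Phi> a b)"
    and l2: "\<And>a. Vector_Spaces.linear sw su (\<Phi> a)"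
  shows "(\<Sum>(a,b)\<leftarrow>l1. \<Phi> a b) = (\<Sum>(a,b)\<leftarrow>l2. \<Phi> a b)"
proof -
  interpret V: complex_vector_space sv using sv by (simp add: complex_vector_space_def)
  let ?X = "fst ` set (l1 @ l2)"
  obtain B c where B: "finite B" "\<forall>x\<in>?X. x = (\<Sum>e\<in>B. sv (c x e) e)"
      "\<forall>e\<in>B. \<exists>f. lfunc sv f \<and> (\<forall>x\<in>?X. f x = c x e)"
    by (rule finite_dual_coordinates[OF sv finite_imageI[OF finite_set]])
  have coord: "(\<Sum>(a,b)\<leftarrow>l1. sw (c a e) b) = (\<Sum>(a,b)\<leftarrow>l2. sw (c a e) b)" if e: "e \<in> B" for e
  proof (rule eq_by_functionals[OF sw])
    obtain f where f: "lfunc sv f" "\<forall>x\<in>?X. f x = c x e" using B(3) e by blast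
    have fc: "\<And>a b. (a, b) \<in> set l1 \<Longrightarrow> f a = c a e" "\<And>a b. (a, b) \<in> set l2 \<Longrightarrow> f a = c a e"
      using f(2) by (metis Un_iff fst_conv image_eqI set_append)+
    fix h assume h: "lfunc sw h"
    have "h (\<Sum>(a,b)\<leftarrow>l1. sw (c a e) b) = (\<Sum>(a,b)\<leftarrow>l1. f a * h b)"
      by (subst lfunc_sum_list[OF h], rule sum_list_map_cong)
        (auto simp: lfunc_scale[OF h] fc)
    also have "\<dots> = (\<Sum>(a,b)\<leftarrow>l2. f a * h b)" using teq2D[OF t f(1) h] .
    also have "\<dots> = h (\<Sum>(a,b)\<leftarrow>l2. sw (c a e) b)"
      by (subst lfunc_sum_list[OF h], rule sum_list_map_cong)
        (auto simp: lfunc_scale[OF h] fc)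
    finally show "h (\<Sum>(a,b)\<leftarrow>l1. sw (c a e) b) = h (\<Sum>(a,b)\<leftarrow>l2. sw (c a e) b)" .
  qed
  have "(\<Sum>(a,b)\<leftarrow>l1. \<Phi> a b) = (\<Sum>e\<in>B. \<Phi> e (\<Sum>(a,b)\<leftarrow>l1. sw (c a e) b))"
    using B(2) unfolding set_append image_Un ball_Un by (intro V.sum_list_expand[OF _ l1 l2]) blast
  also have "\<dots> = (\<Sum>e\<in>B. \<Phi> e (\<Sum>(a,b)\<leftarrow>l2. sw (c a e) b))"
    using coord by (intro sum.cong) auto
  also have "\<dots> = (\<Sum>(a,b)\<leftarrow>l2. \<Phi> a b)"
    using B(2) unfolding set_append image_Un ball_Un by (intro V.sum_list_expand[symmetric, OF _ l1 l2]) blast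
  finally show ?thesis .
qed

lemma sum_list_expand3:
  assumes "\<forall>x\<in>fst ` set l. x = (\<Sum>e\<in>B. sv (c x e) e)"
    and l1: "\<And>b d. lfunc sv (\<lambda>a. T a b d)" and l2: "\<And>a d. lfunc sw (\<lambda>b. T a b d)"
  shows "(\<Sum>(a,b,d)\<leftarrow>l. T a b d) = (\<Sum>e\<in>B. \<Sum>(b,d)\<leftarrow>map (\<lambda>(a,b,d). (sw (c a e) b, d)) l. T e b d)"
  using assms(1)
proof (induction l)
  case (Cons p l)
  obtain a b d where p: "p = (a, b, d)" by (cases p) force
  have a: "a = (\<Sum>e\<in>B. sv (c a e) e)" using Cons.prems p by auto
  have la: "Vector_Spaces.linear sv (*) (\<lambda>a. T a b d)" using l1 by (simp add: lfunc_def)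
  have "T a b d = (\<Sum>e\<in>B. T e (sw (c a e) b) d)"
    by (subst a) (simp add: linear_map_sum[OF la] linear_map_scale[OF la] lfunc_scale[OF l2])
  moreover have "(\<Sum>(a,b,d)\<leftarrow>l. T a b d) =
      (\<Sum>e\<in>B. \<Sum>(b,d)\<leftarrow>map (\<lambda>(a,b,d). (sw (c a e) b, d)) l. T e b d)"
    using Cons by auto
  ultimately show ?case by (simp add: p sum.distrib)
qed simp

lemma teq3_trilinear:
  assumes sv: "vector_space sv" and sw: "vector_space sw" and su: "vector_space su"
    and t: "teq3 sv sw su l1 l2"
    and l1: "\<And>b d. lfunc sv (\<lambda>a. T a b d)" and l2: "\<And>a d. lfunc sw (\<lambda>b. T a b d)"
    and l3: "\<And>a b. lfunc su (\<lambda>d. T a b d)"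
  shows "(\<Sum>(a,b,d)\<leftarrow>l1. T a b d) = (\<Sum>(a,b,d)\<leftarrow>l2. T a b d)"
proof -
  let ?X = "fst ` set (l1 @ l2)"
  obtain B c where B: "finite B" "\<forall>x\<in>?X. x = (\<Sum>e\<in>B. sv (c x e) e)"
      "\<forall>e\<in>B. \<exists>f. lfunc sv f \<and> (\<forall>x\<in>?X. f x = c x e)"
    by (rule finite_dual_coordinates[OF sv finite_imageI[OF finite_set]])
  have coord: "(\<Sum>(b,d)\<leftarrow>map (\<lambda>(a,b,d). (sw (c a e) b, d)) l1. T e b d) =
      (\<Sum>(b,d)\<leftarrow>map (\<lambda>(a,b,d). (sw (c a e) b, d)) l2. T e b d)" if e: "e \<in> B" for e
  proof (rule teq2_bilinear[OF sw su])
    obtain f where f: "lfunc sv f" "\<forall>x\<in>?X. f x = c x e" using B(3) e by blast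
    have fc: "\<And>a b d. (a, b, d) \<in> set l1 \<Longrightarrow> f a = c a e" "\<And>a b d. (a, b, d) \<in> set l2 \<Longrightarrow> f a = c a e"
      using f(2) by (metis Un_iff fst_conv image_eqI set_append)+
    show "teq2 sw su (map (\<lambda>(a,b,d). (sw (c a e) b, d)) l1) (map (\<lambda>(a,b,d). (sw (c a e) b, d)) l2)"
      unfolding teq2_def
    proof (intro allI impI)
      fix g h assume gh: "lfunc sw g \<and> lfunc su h"
      have "(\<Sum>(b,d)\<leftarrow>map (\<lambda>(a,b,d). (sw (c a e) b, d)) l1. g b * h d) = (\<Sum>(a,b,d)\<leftarrow>l1. f a * g b * h d)"
        by (simp add: o_def case_prod_beta, rule sum_list_map_cong) (auto simp: lfunc_scale[of sw g] gh fc)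
      also have "\<dots> = (\<Sum>(a,b,d)\<leftarrow>l2. f a * g b * h d)"
        using t f(1) gh unfolding teq3_def by blast
      also have "\<dots> = (\<Sum>(b,d)\<leftarrow>map (\<lambda>(a,b,d). (sw (c a e) b, d)) l2. g b * h d)"
        by (simp add: o_def case_prod_beta, rule sum_list_map_cong) (auto simp: lfunc_scale[of sw g] gh fc)
      finally show "(\<Sum>(b,d)\<leftarrow>map (\<lambda>(a,b,d). (sw (c a e) b, d)) l1. g b * h d) =
         (\<Sum>(b,d)\<leftarrow>map (\<lambda>(a,b,d). (sw (c a e) b, d)) l2. g b * h d)" .
    qed
  qed (use l2 l3 in \<open>auto simp: lfunc_def\<close>)
  have "(\<Sum>(a,b,d)\<leftarrow>l1. T a b d) = (\<Sum>e\<in>B. \<Sum>(b,d)\<leftarrow>map (\<lambda>(a,b,d). (sw (c a e) b, d)) l1. T e b d)"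
    using B(2) unfolding set_append image_Un ball_Un by (intro sum_list_expand3[OF _ l1 l2]) blast
  also have "\<dots> = (\<Sum>e\<in>B. \<Sum>(b,d)\<leftarrow>map (\<lambda>(a,b,d). (sw (c a e) b, d)) l2. T e b d)"
    using coord by (intro sum.cong) auto
  also have "\<dots> = (\<Sum>(a,b,d)\<leftarrow>l2. T a b d)"
    using B(2) unfolding set_append image_Un ball_Un by (intro sum_list_expand3[symmetric, OF _ l1 l2]) blast
  finally show ?thesis .
qed

lemma teq2_basis_expansion:
  assumes sw: "vector_space sw"
    and c: "\<forall>x\<in>fst ` set l. x = (\<Sum>e\<in>B. sv (c x e) e)" and fin: "finite B"
  obtains Bl where "set Bl = B" "distinct Bl" "teq2 sv sw l (map (\<lambda>e. (e, \<Sum>(a,b)\<leftarrow>l. sw (c a e) b)) Bl)"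
proof -
  obtain Bl where Bl: "set Bl = B" "distinct Bl" using finite_distinct_list[OF fin] by blast
  have "teq2 sv sw l (map (\<lambda>e. (e, \<Sum>(a,b)\<leftarrow>l. sw (c a e) b)) Bl)"
    unfolding teq2_def
  proof (intro allI impI)
    fix f g assume fg: "lfunc sv f \<and> lfunc sw g"
    then interpret V: complex_vector_space sv
      unfolding complex_vector_space_def using lfunc_vector_space by blast
    have "(\<Sum>(a,b)\<leftarrow>l. f a * g b) = (\<Sum>e\<in>B. f e * g (\<Sum>(a,b)\<leftarrow>l. sw (c a e) b))"
      by (rule V.sum_list_expand[OF c, where su = "(*)"])
        (use fg lfunc_cmult lfunc_multc in \<open>auto simp: lfunc_def\<close>)
    also have "\<dots> = (\<Sum>(a,b)\<leftarrow>map (\<lambda>e. (e, \<Sum>(a,b)\<leftarrow>l. sw (c a e) b)) Bl. f a * g b)"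
      using Bl by (simp add: o_def sum_list_distinct_conv_sum_set)
    finally show "(\<Sum>(a,b)\<leftarrow>l. f a * g b) = (\<Sum>(a,b)\<leftarrow>map (\<lambda>e. (e, \<Sum>(a,b)\<leftarrow>l. sw (c a e) b)) Bl. f a * g b)" .
  qed
  then show ?thesis using Bl that by blast
qed

lemma teq2_annihilated_right:
  assumes sv: "vector_space sv" and sw: "vector_space sw"
    and Ts: "\<And>\<tau>. \<tau> \<in> Ts \<Longrightarrow> lfunc sw \<tau>"
    and zero: "\<And>f \<tau>. lfunc sv f \<Longrightarrow> \<tau> \<in> Ts \<Longrightarrow> (\<Sum>(a,b)\<leftarrow>l. f a * \<tau> b) = 0"
  obtains l' where "teq2 sv sw l l'" "\<forall>(a,b)\<in>set l'. \<forall>\<tau>\<in>Ts. \<tau> b = 0"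
proof -
  obtain B c where B: "finite B" "\<forall>x\<in>fst ` set l. x = (\<Sum>e\<in>B. sv (c x e) e)"
      "\<forall>e\<in>B. \<exists>f. lfunc sv f \<and> (\<forall>x\<in>fst ` set l. f x = c x e)"
    by (rule finite_dual_coordinates[OF sv finite_imageI[OF finite_set]])
  obtain Bl where Bl: "set Bl = B" "teq2 sv sw l (map (\<lambda>e. (e, \<Sum>(a,b)\<leftarrow>l. sw (c a e) b)) Bl)"
    using teq2_basis_expansion[OF sw B(2,1)] by blast
  have "\<tau> (\<Sum>(a,b)\<leftarrow>l. sw (c a e) b) = 0" if e: "e \<in> B" and t: "\<tau> \<in> Ts" for e \<tau>
  proof -
    obtain f where f: "lfunc sv f" "\<forall>x\<in>fst ` set l. f x = c x e" using B(3) e by blast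
    have fc: "\<And>a b. (a, b) \<in> set l \<Longrightarrow> f a = c a e" using f(2) by (metis fst_conv image_eqI)
    have "\<tau> (\<Sum>(a,b)\<leftarrow>l. sw (c a e) b) = (\<Sum>(a,b)\<leftarrow>l. f a * \<tau> b)"
      by (subst lfunc_sum_list[OF Ts[OF t]], rule sum_list_map_cong)
        (auto simp: lfunc_scale[OF Ts[OF t]] fc)
    also have "\<dots> = 0" using zero[OF f(1) t] .
    finally show ?thesis .
  qed
  then show ?thesis using that Bl by auto
qed

text \<open>Expand the tensor along a basis extending a basis of the kernel of r; the right leg
  belonging to a basis vector outside the kernel is then killed by r.\<close>

lemma teq2_kernel_split:
  assumes sv: "vector_space sv" and r: "Vector_Spaces.linear sv sk r"
    and zero: "teq2 sk sk (map (\<lambda>(u,v). (r u, r v)) l) []"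
  obtains l' where "teq2 sv sv l l'" "\<forall>(a,b)\<in>set l'. r a = 0 \<or> r b = 0"
proof -
  interpret V: complex_vector_space sv using sv by (simp add: complex_vector_space_def)
  let ?X = "fst ` set l"
  let ?N = "V.span ?X \<inter> {x. r x = 0}"
  obtain B1 where B1: "B1 \<subseteq> ?N" "V.independent B1" "?N \<subseteq> V.span B1"
    by (rule V.maximal_independent_subset)
  obtain B c where B: "finite B" "B1 \<subseteq> B" "V.independent B" "B \<subseteq> V.span ?X"
      "\<forall>x\<in>?X. x = (\<Sum>e\<in>B. sv (c x e) e)"
    by (rule V.finite_coordinates[OF finite_imageI[OF finite_set] B1(2)]) (use B1(1) in blast)
  define w where "w e = (\<Sum>(a,b)\<leftarrow>l. sv (c a e) b)" for e
  obtain Bl where Bl: "set Bl = B" "distinct Bl" "teq2 sv sv l (map (\<lambda>e. (e, w e)) Bl)"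
    unfolding w_def by (rule teq2_basis_expansion[OF sv B(5,1)])
  have "r (w e0) = 0" if e0: "e0 \<in> B - B1" for e0
  proof -
    have "\<forall>x\<in>V.span B. r x = 0 \<longrightarrow> x \<in> V.span B1"
      using B1(3) V.span_minimal[OF B(4) V.subspace_span] by blast
    then obtain \<phi> where \<phi>: "lfunc sk \<phi>" "\<And>e. e \<in> B \<Longrightarrow> \<phi> (r e) = (if e = e0 then 1 else 0)"
      using V.functional_dual_to_image[OF r B(1,3,2) _ _ e0] B1(1) by blast
    show ?thesis
    proof (rule eq_by_functionals[OF lfunc_vector_space[OF \<phi>(1)]])
      fix \<psi> assume \<psi>: "lfunc sk \<psi>"
      have "0 = (\<Sum>(a,b)\<leftarrow>l. \<phi> (r a) * \<psi> (r b))"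
        using teq2D[OF zero \<phi>(1) \<psi>] by (simp add: o_def split_def)
      also have "\<dots> = (\<Sum>(a,b)\<leftarrow>map (\<lambda>e. (e, w e)) Bl. \<phi> (r a) * \<psi> (r b))"
        by (rule teq2D[OF Bl(3)]) (use \<phi>(1) \<psi> r in \<open>auto intro: lfunc_compose\<close>)
      also have "\<dots> = (\<Sum>e\<in>B. \<phi> (r e) * \<psi> (r (w e)))"
        using Bl(1,2) by (simp add: o_def sum_list_distinct_conv_sum_set)
      also have "\<dots> = (\<Sum>e\<in>B. if e = e0 then \<psi> (r (w e)) else 0)"
        by (rule sum.cong) (auto simp: \<phi>(2))
      also have "\<dots> = \<psi> (r (w e0))" using e0 B(1) by simp
      finally show "\<psi> (r (w e0)) = \<psi> 0" using lfunc_0[OF \<psi>] by simp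
    qed
  qed
  then have "\<forall>(a,b)\<in>set (map (\<lambda>e. (e, w e)) Bl). r a = 0 \<or> r b = 0"
    using B1(1) Bl(1) by auto
  then show ?thesis using that Bl(3) by blast
qed

section \<open>Sweedler sums and convolution of functionals\<close>

lemma sum_list_concat_map:
  "(\<Sum>x\<leftarrow>concat (map G l). F x) = (\<Sum>y\<leftarrow>l. \<Sum>x\<leftarrow>G y. F x)"
  by (induction l) auto

lemma sum_list_swap:
  fixes F :: "_ \<Rightarrow> _ \<Rightarrow> 'c::comm_monoid_add"
  shows "(\<Sum>a\<leftarrow>xs. \<Sum>b\<leftarrow>ys. F a b) = (\<Sum>b\<leftarrow>ys. \<Sum>a\<leftarrow>xs. F a b)"
  by (induction xs) (simp_all add: sum_list_addf)

lemma cnj_sum_list: "cnj (\<Sum>x\<leftarrow>xs. f x) = (\<Sum>x\<leftarrow>xs. cnj (f x))"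
  by (induction xs) auto

locale real_qgroup =
  fixes sc :: "complex \<Rightarrow> 'a::ring_1 \<Rightarrow> 'a" and st :: "'a \<Rightarrow> 'a"
    and cop :: "'a \<Rightarrow> ('a \<times> 'a) list" and eps :: "'a \<Rightarrow> complex" and S :: "'a \<Rightarrow> 'a"
  assumes real_quantum_group: "real_quantum_group sc st cop eps S"
begin

lemma
  shows vector_space_sc: "vector_space sc"
    and lfunc_eps: "lfunc sc eps"
    and cop_add: "teq2 sc sc (cop (x + y)) (cop x @ cop y)"
    and cop_scale: "teq2 sc sc (cop (sc c x)) (map (\<lambda>(u,v). (sc c u, v)) (cop x))"
    and coassoc: "teq3 sc sc sc
      (concat (map (\<lambda>(u,v). map (\<lambda>(p,q). (p,q,v)) (cop u)) (cop x)))
      (concat (map (\<lambda>(u,v). map (\<lambda>(p,q). (u,p,q)) (cop v)) (cop x)))"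
    and counit_left: "(\<Sum>(u,v)\<leftarrow>cop x. sc (eps u) v) = x"
    and counit_right: "(\<Sum>(u,v)\<leftarrow>cop x. sc (eps v) u) = x"
    and scale_mult_left: "sc c (x * y) = sc c x * y"
    and cop_mult: "teq2 sc sc (cop (x * y))
      (concat (map (\<lambda>(a,b). map (\<lambda>(c,d). (a * c, b * d)) (cop y)) (cop x)))"
    and cop_one: "teq2 sc sc (cop 1) [(1, 1)]"
    and eps_mult: "eps (x * y) = eps x * eps y"
    and eps_one: "eps 1 = 1"
    and linear_S: "Vector_Spaces.linear sc sc S"
    and antipode_left: "(\<Sum>(u,v)\<leftarrow>cop x. S u * v) = sc (eps x) 1"
    and antipode_right: "(\<Sum>(u,v)\<leftarrow>cop x. u * S v) = sc (eps x) 1"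
    and st_add: "st (x + y) = st x + st y"
    and st_scale: "st (sc c x) = sc (cnj c) (st x)"
    and st_st: "st (st x) = x"
    and cop_st: "teq2 sc sc (cop (st x)) (map (\<lambda>(u,v). (st u, st v)) (cop x))"
  using real_quantum_group unfolding real_quantum_group_def coalgebra_def by simp_all

lemma scale_mult_right: "sc c (x * y) = x * sc c y"
  using real_quantum_group unfolding real_quantum_group_def by metis

lemma linear_mult_right: "Vector_Spaces.linear sc sc (\<lambda>x. x * a)"
  using vector_space_sc by (simp add: Vector_Spaces.linear_iff distrib_right scale_mult_left)

lemma linear_mult_left: "Vector_Spaces.linear sc sc (\<lambda>x. a * x)"
  using vector_space_sc by (simp add: Vector_Spaces.linear_iff distrib_left scale_mult_right)

lemma
  assumes "lfunc sc f"
  shows lfunc_mult_right_arg: "lfunc sc (\<lambda>x. f (x * a))"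
    and lfunc_mult_left_arg: "lfunc sc (\<lambda>x. f (a * x))"
    and lfunc_S_arg: "lfunc sc (\<lambda>x. f (S x))"
  using lfunc_compose[OF assms] linear_mult_right linear_mult_left linear_S by blast+

definition sweedler :: "'a \<Rightarrow> ('a \<Rightarrow> 'a \<Rightarrow> complex) \<Rightarrow> complex" where
  "sweedler x \<Phi> = (\<Sum>(u,v)\<leftarrow>cop x. \<Phi> u v)"

definition bilin_form :: "('a \<Rightarrow> 'a \<Rightarrow> complex) \<Rightarrow> bool" where
  "bilin_form \<Phi> \<longleftrightarrow> (\<forall>b. lfunc sc (\<lambda>a. \<Phi> a b)) \<and> (\<forall>a. lfunc sc (\<Phi> a))"

lemma bilin_formI:
  "(\<And>b. lfunc sc (\<lambda>a. \<Phi> a b)) \<Longrightarrow> (\<And>a. lfunc sc (\<lambda>b. \<Phi> a b)) \<Longrightarrow> bilin_form \<Phi>"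
  by (simp add: bilin_form_def)

lemma
  assumes "bilin_form \<Phi>"
  shows bilin_form_left: "lfunc sc (\<lambda>a. \<Phi> a b)"
    and bilin_form_right: "lfunc sc (\<lambda>b. \<Phi> a b)"
  using assms by (simp_all add: bilin_form_def)

lemma bilin_form_mult: "lfunc sc \<phi> \<Longrightarrow> lfunc sc \<psi> \<Longrightarrow> bilin_form (\<lambda>u v. \<phi> u * \<psi> v)"
  by (intro bilin_formI lfunc_multc lfunc_cmult)

lemma sweedler_teq2: "teq2 sc sc (cop x) l \<Longrightarrow> bilin_form \<Phi> \<Longrightarrow> sweedler x \<Phi> = (\<Sum>(u,v)\<leftarrow>l. \<Phi> u v)"
  unfolding sweedler_def
  by (rule teq2_bilinear[OF vector_space_sc vector_space_sc])
    (auto simp: bilin_form_def lfunc_def)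

lemma
  assumes "bilin_form \<Phi>"
  shows sweedler_add: "sweedler (x + y) \<Phi> = sweedler x \<Phi> + sweedler y \<Phi>"
    and sweedler_scale: "sweedler (sc c x) \<Phi> = c * sweedler x \<Phi>"
  using sweedler_teq2[OF cop_add assms] sweedler_teq2[OF cop_scale assms]
  by (simp_all add: sweedler_def split_def o_def lfunc_scale[OF bilin_form_left[OF assms]]
      sum_list_const_mult)

lemma lfunc_sweedler: "bilin_form \<Phi> \<Longrightarrow> lfunc sc (\<lambda>x. sweedler x \<Phi>)"
  by (rule lfuncI[OF vector_space_sc]) (auto simp: sweedler_add sweedler_scale)

lemma lfunc_sweedler_param:
  "(\<And>u v. lfunc sc (\<lambda>x. F u v x)) \<Longrightarrow> lfunc sc (\<lambda>x. sweedler y (\<lambda>u v. F u v x))"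
  unfolding sweedler_def split_def by (rule lfunc_sum_list_closed[OF vector_space_sc])

lemma sweedler_legs: "lfunc sc f \<Longrightarrow> f (\<Sum>(u,v)\<leftarrow>cop x. H u v) = sweedler x (\<lambda>u v. f (H u v))"
  by (simp add: lfunc_sum_list sweedler_def split_def)

lemma sweedler_cong: "(\<And>u v. \<Phi> u v = \<Psi> u v) \<Longrightarrow> sweedler x \<Phi> = sweedler x \<Psi>"
  by (simp add: sweedler_def)

lemma sweedler_cmult: "c * sweedler x \<Phi> = sweedler x (\<lambda>u v. c * \<Phi> u v)"
  by (simp add: sweedler_def sum_list_const_mult split_def)

lemma sweedler_multc: "sweedler x \<Phi> * c = sweedler x (\<lambda>u v. \<Phi> u v * c)"
  by (simp add: sweedler_def sum_list_mult_const split_def)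

lemma sweedler_times:
  "sweedler x \<Phi> * sweedler y \<Psi> = sweedler x (\<lambda>u v. sweedler y (\<lambda>p q. \<Phi> u v * \<Psi> p q))"
  unfolding sweedler_multc by (simp only: sweedler_cmult)

lemma cnj_sweedler: "cnj (sweedler x \<Phi>) = sweedler x (\<lambda>u v. cnj (\<Phi> u v))"
  by (simp add: sweedler_def cnj_sum_list split_def)

lemma sweedler_swap:
  "sweedler x (\<lambda>u v. sweedler y (\<lambda>p q. F u v p q)) = sweedler y (\<lambda>p q. sweedler x (\<lambda>u v. F u v p q))"
  unfolding sweedler_def split_def by (rule sum_list_swap)

lemma sweedler_coassoc:
  assumes "\<And>b d. lfunc sc (\<lambda>a. T a b d)" "\<And>a d. lfunc sc (\<lambda>b. T a b d)" "\<And>a b. lfunc sc (\<lambda>d. T a b d)"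
  shows "sweedler x (\<lambda>u v. sweedler u (\<lambda>p q. T p q v)) = sweedler x (\<lambda>u v. sweedler v (\<lambda>p q. T u p q))"
  using teq3_trilinear[OF vector_space_sc vector_space_sc vector_space_sc coassoc assms]
  by (simp add: sweedler_def sum_list_concat_map split_def o_def)

lemma
  assumes "bilin_form \<Phi>"
  shows sweedler_mult: "sweedler (x * y) \<Phi> = sweedler x (\<lambda>a b. sweedler y (\<lambda>c d. \<Phi> (a * c) (b * d)))"
    and sweedler_one: "sweedler 1 \<Phi> = \<Phi> 1 1"
    and sweedler_st: "sweedler (st x) \<Phi> = sweedler x (\<lambda>u v. \<Phi> (st u) (st v))"
  using sweedler_teq2[OF cop_mult assms] sweedler_teq2[OF cop_one assms] sweedler_teq2[OF cop_st assms]
  by (simp_all add: sweedler_def sum_list_concat_map split_def o_def)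

lemma
  assumes "lfunc sc f"
  shows sweedler_counit_left: "sweedler x (\<lambda>u v. eps u * f v) = f x"
    and sweedler_counit_right: "sweedler x (\<lambda>u v. f u * eps v) = f x"
proof -
  have "f x = sweedler x (\<lambda>u v. f (sc (eps u) v))"
    using sweedler_legs[OF assms, where H = "\<lambda>u v. sc (eps u) v" and x = x] by (simp only: counit_left)
  then show "sweedler x (\<lambda>u v. eps u * f v) = f x" by (simp only: lfunc_scale[OF assms])
  have "f x = sweedler x (\<lambda>u v. f (sc (eps v) u))"
    using sweedler_legs[OF assms, where H = "\<lambda>u v. sc (eps v) u" and x = x] by (simp only: counit_right)
  then show "sweedler x (\<lambda>u v. f u * eps v) = f x" by (simp only: lfunc_scale[OF assms] mult.commute)
qed

definition conv :: "('a \<Rightarrow> complex) \<Rightarrow> ('a \<Rightarrow> complex) \<Rightarrow> 'a \<Rightarrow> complex" where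
  "conv \<phi> \<psi> x = sweedler x (\<lambda>u v. \<phi> u * \<psi> v)"

lemma lfunc_conv: "lfunc sc \<phi> \<Longrightarrow> lfunc sc \<psi> \<Longrightarrow> lfunc sc (conv \<phi> \<psi>)"
  unfolding conv_def[abs_def] by (intro lfunc_sweedler bilin_form_mult)

lemma conv_assoc:
  assumes "lfunc sc \<phi>" "lfunc sc \<psi>" "lfunc sc \<chi>"
  shows "conv (conv \<phi> \<psi>) \<chi> = conv \<phi> (conv \<psi> \<chi>)"
proof
  fix x
  have "conv (conv \<phi> \<psi>) \<chi> x = sweedler x (\<lambda>u v. sweedler u (\<lambda>p q. \<phi> p * \<psi> q * \<chi> v))"
    unfolding conv_def by (simp add: sweedler_multc)
  also have "\<dots> = sweedler x (\<lambda>u v. sweedler v (\<lambda>p q. \<phi> u * \<psi> p * \<chi> q))"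
    by (rule sweedler_coassoc; intro lfunc_multc lfunc_cmult assms)
  also have "\<dots> = conv \<phi> (conv \<psi> \<chi>) x"
    unfolding conv_def by (simp add: sweedler_cmult mult.assoc)
  finally show "conv (conv \<phi> \<psi>) \<chi> x = conv \<phi> (conv \<psi> \<chi>) x" .
qed

lemma conv_eps_left: "lfunc sc \<phi> \<Longrightarrow> conv eps \<phi> = \<phi>"
  unfolding conv_def by (rule ext) (rule sweedler_counit_left)

lemma conv_eps_right: "lfunc sc \<phi> \<Longrightarrow> conv \<phi> eps = \<phi>"
  unfolding conv_def by (rule ext) (rule sweedler_counit_right)

lemma conv_one: "lfunc sc \<phi> \<Longrightarrow> lfunc sc \<psi> \<Longrightarrow> conv \<phi> \<psi> 1 = \<phi> 1 * \<psi> 1"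
  unfolding conv_def by (intro sweedler_one bilin_form_mult)

section \<open>Translations by functionals\<close>

definition rtransl :: "('a \<Rightarrow> complex) \<Rightarrow> 'a \<Rightarrow> 'a" where
  "rtransl \<chi> x = (\<Sum>(u,v)\<leftarrow>cop x. sc (\<chi> v) u)"

definition ltransl :: "('a \<Rightarrow> complex) \<Rightarrow> 'a \<Rightarrow> 'a" where
  "ltransl \<chi> x = (\<Sum>(u,v)\<leftarrow>cop x. sc (\<chi> u) v)"

lemma functional_rtransl: "lfunc sc h \<Longrightarrow> h (rtransl \<chi> x) = conv h \<chi> x"
  by (simp add: rtransl_def conv_def sweedler_legs lfunc_scale mult.commute)

lemma functional_ltransl: "lfunc sc h \<Longrightarrow> h (ltransl \<chi> x) = conv \<chi> h x"
  by (simp add: ltransl_def conv_def sweedler_legs lfunc_scale)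

lemma eq_by_lfunc: "(\<And>h. lfunc sc h \<Longrightarrow> h x = h y) \<Longrightarrow> x = y"
  by (rule eq_by_functionals[OF vector_space_sc])

lemma linear_by_lfunc: "(\<And>h. lfunc sc h \<Longrightarrow> lfunc sc (\<lambda>x. h (L x))) \<Longrightarrow> Vector_Spaces.linear sc sc L"
  by (rule linear_by_functionals[OF vector_space_sc vector_space_sc])

lemma linear_rtransl: "lfunc sc \<chi> \<Longrightarrow> Vector_Spaces.linear sc sc (rtransl \<chi>)"
  by (rule linear_by_lfunc) (simp add: functional_rtransl lfunc_conv)

lemma rtransl_rtransl:
  "lfunc sc \<chi> \<Longrightarrow> lfunc sc \<psi> \<Longrightarrow> rtransl \<chi> (rtransl \<psi> x) = rtransl (conv \<chi> \<psi>) x"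
  by (rule eq_by_lfunc) (simp add: functional_rtransl lfunc_conv conv_assoc)

lemma rtransl_eps: "rtransl eps x = x"
  by (simp add: rtransl_def counit_right)

lemma rtransl_one: "lfunc sc \<chi> \<Longrightarrow> \<chi> 1 = 1 \<Longrightarrow> rtransl \<chi> 1 = 1"
  by (rule eq_by_lfunc) (simp add: functional_rtransl conv_one)

lemma ltransl_one: "lfunc sc \<chi> \<Longrightarrow> \<chi> 1 = 1 \<Longrightarrow> ltransl \<chi> 1 = 1"
  by (rule eq_by_lfunc) (simp add: functional_ltransl conv_one)

text \<open>Dual form of left colinearity of right translation: \<Delta> \<circ> R = (id \<otimes> R) \<circ> \<Delta>.\<close>

lemma conv_rtransl:
  assumes "lfunc sc f" "lfunc sc f'" "lfunc sc \<chi>"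
  shows "conv f f' (rtransl \<chi> b) = conv f (\<lambda>y. f' (rtransl \<chi> y)) b"
proof -
  have "(\<lambda>y. f' (rtransl \<chi> y)) = conv f' \<chi>" by (intro ext functional_rtransl assms)
  then show ?thesis using assms by (simp add: functional_rtransl lfunc_conv conv_assoc)
qed

definition mult_functional :: "('a \<Rightarrow> complex) \<Rightarrow> bool" where
  "mult_functional \<chi> \<longleftrightarrow> lfunc sc \<chi> \<and> (\<forall>x y. \<chi> (x * y) = \<chi> x * \<chi> y) \<and> \<chi> 1 = 1"

lemma
  assumes "mult_functional \<chi>"
  shows mult_functional_lfunc: "lfunc sc \<chi>"
    and mult_functional_mult: "\<chi> (x * y) = \<chi> x * \<chi> y"
    and mult_functional_one: "\<chi> 1 = 1"
  using assms by (simp_all add: mult_functional_def)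

lemma rtransl_mult:
  assumes \<chi>: "mult_functional \<chi>"
  shows "rtransl \<chi> (x * y) = rtransl \<chi> x * rtransl \<chi> y"
proof (rule eq_by_lfunc)
  fix h assume h: "lfunc sc h"
  note lf = mult_functional_lfunc[OF \<chi>]
  have "h (rtransl \<chi> (x * y)) = sweedler x (\<lambda>a b. sweedler y (\<lambda>c d. h (a * c) * \<chi> (b * d)))"
    by (simp add: functional_rtransl[OF h] conv_def sweedler_mult bilin_form_mult h lf)
  also have "\<dots> = sweedler x (\<lambda>a b. sweedler y (\<lambda>c d. h (a * c) * \<chi> d) * \<chi> b)"
    by (intro sweedler_cong) (simp add: sweedler_multc sweedler_cmult mult_functional_mult[OF \<chi>] mult_ac)
  also have "\<dots> = sweedler x (\<lambda>a b. h (a * rtransl \<chi> y) * \<chi> b)"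
    by (simp add: functional_rtransl[OF lfunc_mult_left_arg[OF h]] conv_def)
  also have "\<dots> = h (rtransl \<chi> x * rtransl \<chi> y)"
    by (simp add: functional_rtransl[OF lfunc_mult_right_arg[OF h]] conv_def)
  finally show "h (rtransl \<chi> (x * y)) = h (rtransl \<chi> x * rtransl \<chi> y)" .
qed

lemma ltransl_mult:
  assumes \<chi>: "mult_functional \<chi>"
  shows "ltransl \<chi> (x * y) = ltransl \<chi> x * ltransl \<chi> y"
proof (rule eq_by_lfunc)
  fix h assume h: "lfunc sc h"
  note lf = mult_functional_lfunc[OF \<chi>]
  have "h (ltransl \<chi> (x * y)) = sweedler x (\<lambda>a b. \<chi> a * sweedler y (\<lambda>c d. \<chi> c * h (b * d)))"
    by (simp add: functional_ltransl[OF h] conv_def sweedler_mult bilin_form_mult h lf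
        mult_functional_mult[OF \<chi>] sweedler_cmult mult_ac)
  also have "\<dots> = sweedler x (\<lambda>a b. \<chi> a * h (b * ltransl \<chi> y))"
    by (simp add: functional_ltransl[OF lfunc_mult_left_arg[OF h]] conv_def)
  also have "\<dots> = h (ltransl \<chi> x * ltransl \<chi> y)"
    by (simp add: functional_ltransl[OF lfunc_mult_right_arg[OF h]] conv_def)
  finally show "h (ltransl \<chi> (x * y)) = h (ltransl \<chi> x * ltransl \<chi> y)" .
qed

section \<open>The antipode on functionals\<close>

lemma conv_inverse_unique:
  assumes "lfunc sc a" "lfunc sc b" "lfunc sc c" and "conv a b = eps" "conv b c = eps"
  shows "a = c"
proof -
  have "a = conv a (conv b c)" by (simp only: assms(5) conv_eps_right[OF assms(1)])
  also have "\<dots> = conv (conv a b) c" by (simp only: conv_assoc[OF assms(1-3)])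
  also have "\<dots> = c" by (simp only: assms(4) conv_eps_left[OF assms(3)])
  finally show ?thesis .
qed

lemma
  assumes \<chi>: "mult_functional \<chi>"
  shows conv_antipode_right: "conv \<chi> (\<lambda>x. \<chi> (S x)) = eps"
    and conv_antipode_left: "conv (\<lambda>x. \<chi> (S x)) \<chi> = eps"
proof -
  note lf = mult_functional_lfunc[OF \<chi>]
  have "conv \<chi> (\<lambda>x. \<chi> (S x)) x = \<chi> (\<Sum>(u,v)\<leftarrow>cop x. u * S v)" for x
    by (simp add: conv_def sweedler_legs[OF lf] mult_functional_mult[OF \<chi>])
  then show "conv \<chi> (\<lambda>x. \<chi> (S x)) = eps"
    by (simp add: antipode_right lfunc_scale[OF lf] mult_functional_one[OF \<chi>] fun_eq_iff)
  have "conv (\<lambda>x. \<chi> (S x)) \<chi> x = \<chi> (\<Sum>(u,v)\<leftarrow>cop x. S u * v)" for x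
    by (simp add: conv_def sweedler_legs[OF lf] mult_functional_mult[OF \<chi>])
  then show "conv (\<lambda>x. \<chi> (S x)) \<chi> = eps"
    by (simp add: antipode_left lfunc_scale[OF lf] mult_functional_one[OF \<chi>] fun_eq_iff)
qed

text \<open>Bilinear forms are the functionals on the tensor square; this is their convolution.\<close>

definition conv_bilin :: "('a \<Rightarrow> 'a \<Rightarrow> complex) \<Rightarrow> ('a \<Rightarrow> 'a \<Rightarrow> complex) \<Rightarrow> 'a \<Rightarrow> 'a \<Rightarrow> complex" where
  "conv_bilin P Q a b = sweedler a (\<lambda>a1 a2. sweedler b (\<lambda>b1 b2. P a1 b1 * Q a2 b2))"

lemma conv_bilin_assoc:
  assumes p: "bilin_form P" and q: "bilin_form Q" and r: "bilin_form R"
  shows "conv_bilin (conv_bilin P Q) R a b = conv_bilin P (conv_bilin Q R) a b"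
proof -
  note lin = lfunc_sweedler_param lfunc_multc lfunc_cmult bilin_form_left bilin_form_right p q r
  have "conv_bilin (conv_bilin P Q) R a b =
     sweedler a (\<lambda>a1 a2. sweedler b (\<lambda>b1 b2. sweedler a1 (\<lambda>a11 a12. sweedler b1 (\<lambda>b11 b12.
       P a11 b11 * Q a12 b12 * R a2 b2))))"
    unfolding conv_bilin_def by (simp add: sweedler_multc)
  also have "\<dots> = sweedler a (\<lambda>a1 a2. sweedler a1 (\<lambda>a11 a12. sweedler b (\<lambda>b1 b2. sweedler b1 (\<lambda>b11 b12.
       P a11 b11 * Q a12 b12 * R a2 b2))))"
    by (intro sweedler_cong) (rule sweedler_swap)
  also have "\<dots> = sweedler a (\<lambda>a1 a2. sweedler a2 (\<lambda>a21 a22. sweedler b (\<lambda>b1 b2. sweedler b1 (\<lambda>b11 b12.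
       P a1 b11 * Q a21 b12 * R a22 b2))))"
    by (rule sweedler_coassoc) (intro lin)+
  also have "\<dots> = sweedler a (\<lambda>a1 a2. sweedler a2 (\<lambda>a21 a22. sweedler b (\<lambda>b1 b2. sweedler b2 (\<lambda>b21 b22.
       P a1 b1 * Q a21 b21 * R a22 b22))))"
    by (intro sweedler_cong sweedler_coassoc) (intro lin)+
  also have "\<dots> = sweedler a (\<lambda>a1 a2. sweedler b (\<lambda>b1 b2. sweedler a2 (\<lambda>a21 a22. sweedler b2 (\<lambda>b21 b22.
       P a1 b1 * Q a21 b21 * R a22 b22))))"
    by (intro sweedler_cong) (rule sweedler_swap)
  also have "\<dots> = conv_bilin P (conv_bilin Q R) a b"
    unfolding conv_bilin_def by (simp add: sweedler_cmult mult.assoc)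
  finally show ?thesis .
qed

lemma
  assumes p: "bilin_form P"
  shows conv_bilin_eps_right: "conv_bilin P (\<lambda>a b. eps a * eps b) a b = P a b"
    and conv_bilin_eps_left: "conv_bilin (\<lambda>a b. eps a * eps b) P a b = P a b"
proof -
  have "conv_bilin P (\<lambda>a b. eps a * eps b) a b =
      sweedler a (\<lambda>a1 a2. sweedler b (\<lambda>b1 b2. P a1 b1 * eps b2) * eps a2)"
    unfolding conv_bilin_def by (intro sweedler_cong) (simp add: sweedler_multc sweedler_cmult mult_ac)
  also have "\<dots> = P a b"
    by (simp add: sweedler_counit_right bilin_form_left[OF p] bilin_form_right[OF p])
  finally show "conv_bilin P (\<lambda>a b. eps a * eps b) a b = P a b" .
  have "conv_bilin (\<lambda>a b. eps a * eps b) P a b =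
      sweedler a (\<lambda>a1 a2. eps a1 * sweedler b (\<lambda>b1 b2. eps b1 * P a2 b2))"
    unfolding conv_bilin_def by (intro sweedler_cong) (simp add: sweedler_cmult mult_ac)
  also have "\<dots> = P a b"
    by (simp add: sweedler_counit_left bilin_form_left[OF p] bilin_form_right[OF p])
  finally show "conv_bilin (\<lambda>a b. eps a * eps b) P a b = P a b" .
qed

lemma conv_bilin_inverse_unique:
  assumes "bilin_form F" "bilin_form M" "bilin_form G"
    and "conv_bilin F M = (\<lambda>a b. eps a * eps b)" "conv_bilin M G = (\<lambda>a b. eps a * eps b)"
  shows "F a b = G a b"
proof -
  have "F a b = conv_bilin F (conv_bilin M G) a b" by (simp only: assms(5) conv_bilin_eps_right[OF assms(1)])
  also have "\<dots> = conv_bilin (conv_bilin F M) G a b" by (rule conv_bilin_assoc[symmetric, OF assms(1-3)])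
  also have "\<dots> = G a b" by (simp only: assms(4) conv_bilin_eps_left[OF assms(3)])
  finally show ?thesis .
qed

text \<open>As functionals on the tensor square, a \<otimes> b \<mapsto> \<chi> (S (a b)) and a \<otimes> b \<mapsto> \<chi> (S a) \<chi> (S b)
  are both convolution inverses of a \<otimes> b \<mapsto> \<chi> a \<chi> b.\<close>

lemma mult_functional_antipode:
  assumes \<chi>: "mult_functional \<chi>"
  shows "mult_functional (\<lambda>x. \<chi> (S x))"
proof -
  note lf = mult_functional_lfunc[OF \<chi>]
  have lk: "lfunc sc (\<lambda>x. \<chi> (S x))" by (rule lfunc_S_arg[OF lf])
  have "\<chi> (S (a * b)) = \<chi> (S a) * \<chi> (S b)" for a b
  proof (rule conv_bilin_inverse_unique[where F = "\<lambda>a b. \<chi> (S (a * b))" and M = "\<lambda>a b. \<chi> a * \<chi> b"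
        and G = "\<lambda>a b. \<chi> (S a) * \<chi> (S b)"])
    show "bilin_form (\<lambda>a b. \<chi> (S (a * b)))"
      by (intro bilin_formI lfunc_mult_right_arg lfunc_mult_left_arg lk)
    show "conv_bilin (\<lambda>a b. \<chi> (S (a * b))) (\<lambda>a b. \<chi> a * \<chi> b) = (\<lambda>a b. eps a * eps b)"
    proof (intro ext)
      fix a b
      have "conv_bilin (\<lambda>a b. \<chi> (S (a * b))) (\<lambda>a b. \<chi> a * \<chi> b) a b = conv (\<lambda>x. \<chi> (S x)) \<chi> (a * b)"
        unfolding conv_bilin_def conv_def
        by (simp add: sweedler_mult bilin_form_mult lf lk mult_functional_mult[OF \<chi>])
      then show "conv_bilin (\<lambda>a b. \<chi> (S (a * b))) (\<lambda>a b. \<chi> a * \<chi> b) a b = eps a * eps b"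
        by (simp add: conv_antipode_left[OF \<chi>] eps_mult)
    qed
    show "conv_bilin (\<lambda>a b. \<chi> a * \<chi> b) (\<lambda>a b. \<chi> (S a) * \<chi> (S b)) = (\<lambda>a b. eps a * eps b)"
    proof (intro ext)
      fix a b
      have "conv_bilin (\<lambda>a b. \<chi> a * \<chi> b) (\<lambda>a b. \<chi> (S a) * \<chi> (S b)) a b
          = conv \<chi> (\<lambda>x. \<chi> (S x)) a * conv \<chi> (\<lambda>x. \<chi> (S x)) b"
        unfolding conv_bilin_def conv_def sweedler_times by (simp add: mult_ac)
      then show "conv_bilin (\<lambda>a b. \<chi> a * \<chi> b) (\<lambda>a b. \<chi> (S a) * \<chi> (S b)) a b = eps a * eps b"
        by (simp add: conv_antipode_right[OF \<chi>])
    qed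
  qed (intro bilin_form_mult lf lk)+
  moreover have "\<chi> (S 1) = 1"
    using conv_one[OF lk lf] conv_antipode_left[OF \<chi>] by (simp add: eps_one mult_functional_one[OF \<chi>])
  ultimately show ?thesis using lk by (simp add: mult_functional_def)
qed

lemma mult_functional_antipode_antipode:
  assumes \<chi>: "mult_functional \<chi>"
  shows "\<chi> (S (S x)) = \<chi> x"
proof -
  note lf = mult_functional_lfunc[OF \<chi>]
  note \<kappa> = mult_functional_antipode[OF \<chi>]
  have "\<chi> = (\<lambda>x. \<chi> (S (S x)))"
    by (rule conv_inverse_unique[OF lf mult_functional_lfunc[OF \<kappa>] lfunc_S_arg[OF lfunc_S_arg[OF lf]]
        conv_antipode_right[OF \<chi>] conv_antipode_right[OF \<kappa>]])
  then show ?thesis by metis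
qed

lemma sweedler_antipode_mult_left:
  assumes b: "bilin_form \<Psi>"
  shows "sweedler p (\<lambda>p1 p2. sweedler (S p1) (\<lambda>a1 b1. sweedler p2 (\<lambda>a2 b2. \<Psi> (a1 * a2) (b1 * b2))))
    = eps p * \<Psi> 1 1"
proof -
  have "sweedler p (\<lambda>p1 p2. sweedler (S p1) (\<lambda>a1 b1. sweedler p2 (\<lambda>a2 b2. \<Psi> (a1 * a2) (b1 * b2))))
      = sweedler p (\<lambda>p1 p2. sweedler (S p1 * p2) \<Psi>)"
    by (intro sweedler_cong) (rule sweedler_mult[OF b, symmetric])
  also have "\<dots> = sweedler (\<Sum>(u,v)\<leftarrow>cop p. S u * v) \<Psi>"
    by (simp add: sweedler_legs[OF lfunc_sweedler[OF b]])
  also have "\<dots> = eps p * \<Psi> 1 1" by (simp add: antipode_left sweedler_scale[OF b] sweedler_one[OF b])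
  finally show ?thesis .
qed

lemma sweedler_antipode_mult_right:
  assumes b: "bilin_form \<Psi>"
  shows "sweedler q (\<lambda>q1 q2. sweedler q1 (\<lambda>a2 b2. sweedler q2 (\<lambda>u v. \<Psi> (a2 * S v) (b2 * S u))))
    = eps q * \<Psi> 1 1"
proof -
  have lin: "lfunc sc (\<lambda>a. \<Psi> (a * c) d)" "lfunc sc (\<lambda>b. \<Psi> d (b * c))"
    "lfunc sc (\<lambda>v. \<Psi> (c * S v) d)" "lfunc sc (\<lambda>u. \<Psi> d (c * S u))" for c d
    by (intro lfunc_mult_right_arg lfunc_S_arg lfunc_mult_left_arg bilin_form_left[OF b]
        bilin_form_right[OF b])+
  note lin = lfunc_sweedler_param lfunc_sweedler bilin_formI lin
  have "sweedler q (\<lambda>q1 q2. sweedler q1 (\<lambda>a2 b2. sweedler q2 (\<lambda>u v. \<Psi> (a2 * S v) (b2 * S u))))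
      = sweedler q (\<lambda>a2 s. sweedler s (\<lambda>b2 q2. sweedler q2 (\<lambda>u v. \<Psi> (a2 * S v) (b2 * S u))))"
    by (rule sweedler_coassoc) (intro lin)+
  also have "\<dots> = sweedler q (\<lambda>a2 s. sweedler s (\<lambda>w v. sweedler w (\<lambda>b2 u. \<Psi> (a2 * S v) (b2 * S u))))"
    by (intro sweedler_cong sweedler_coassoc[symmetric]) (intro lin)+
  also have "\<dots> = sweedler q (\<lambda>a2 s. sweedler s (\<lambda>w v. eps w * \<Psi> (a2 * S v) 1))"
  proof (intro sweedler_cong)
    fix a2 s w v
    note l2 = bilin_form_right[OF b, of "a2 * S v"]
    have "sweedler w (\<lambda>b2 u. \<Psi> (a2 * S v) (b2 * S u)) = \<Psi> (a2 * S v) (\<Sum>(b2,u)\<leftarrow>cop w. b2 * S u)"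
      by (simp add: sweedler_legs[OF l2])
    then show "sweedler w (\<lambda>b2 u. \<Psi> (a2 * S v) (b2 * S u)) = eps w * \<Psi> (a2 * S v) 1"
      by (simp add: antipode_right lfunc_scale[OF l2])
  qed
  also have "\<dots> = sweedler q (\<lambda>a2 s. \<Psi> (a2 * S s) 1)"
    by (intro sweedler_cong sweedler_counit_left lfunc_S_arg lfunc_mult_left_arg bilin_form_left[OF b])
  also have "\<dots> = \<Psi> (\<Sum>(a2,s)\<leftarrow>cop q. a2 * S s) 1"
    by (simp add: sweedler_legs[OF bilin_form_left[OF b]])
  also have "\<dots> = eps q * \<Psi> 1 1" by (simp add: antipode_right lfunc_scale[OF bilin_form_left[OF b]])
  finally show ?thesis .
qed

text \<open>Insert the counit on the right and expand it via the antipode axiom; coassociativity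
  then regroups the legs so that the antipode axiom can be applied to the left factor.\<close>

lemma sweedler_antipode:
  assumes b: "bilin_form \<Phi>"
  shows "sweedler (S x) \<Phi> = sweedler x (\<lambda>u v. \<Phi> (S v) (S u))"
proof -
  have lin: "lfunc sc (\<lambda>a. \<Phi> (c * (a * e)) d)" "lfunc sc (\<lambda>b. \<Phi> d (c * (b * e)))"
    "lfunc sc (\<lambda>v. \<Phi> (c * (e * S v)) d)" "lfunc sc (\<lambda>u. \<Phi> d (c * (e * S u)))"
    "lfunc sc (\<lambda>a. \<Phi> (a * e) d)" "lfunc sc (\<lambda>b. \<Phi> d (b * e))"
    "lfunc sc (\<lambda>v. \<Phi> (S v) d)" "lfunc sc (\<lambda>u. \<Phi> d (S u))" for c d e
    by (intro lfunc_mult_right_arg lfunc_S_arg lfunc_mult_left_arg bilin_form_left[OF b]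
        bilin_form_right[OF b])+
  note lin = lfunc_sweedler_param lfunc_sweedler bilin_formI lfunc_S_arg lin
  let ?T = "\<lambda>a1 b1 q. sweedler q (\<lambda>q1 q2. sweedler q1 (\<lambda>a2 b2. sweedler q2 (\<lambda>u v.
       \<Phi> (a1 * (a2 * S v)) (b1 * (b2 * S u)))))"
  have "sweedler (S x) \<Phi> = sweedler x (\<lambda>p q. sweedler (S p) \<Phi> * eps q)"
    by (rule sweedler_counit_right[symmetric]) (intro lin b)
  also have "\<dots> = sweedler x (\<lambda>p q. sweedler (S p) (\<lambda>a1 b1. ?T a1 b1 q))"
  proof (intro sweedler_cong)
    fix p q
    have "?T a1 b1 q = eps q * \<Phi> a1 b1" for a1 b1
    proof -
      have "bilin_form (\<lambda>\<alpha> \<beta>. \<Phi> (a1 * \<alpha>) (b1 * \<beta>))"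
        by (intro bilin_formI lfunc_mult_left_arg bilin_form_left[OF b] bilin_form_right[OF b])
      from sweedler_antipode_mult_right[OF this, of q] show ?thesis by simp
    qed
    then show "sweedler (S p) \<Phi> * eps q = sweedler (S p) (\<lambda>a1 b1. ?T a1 b1 q)"
      by (simp only: mult.commute[of "sweedler (S p) \<Phi>"] sweedler_cmult)
  qed
  also have "\<dots> = sweedler x (\<lambda>p q. sweedler q (\<lambda>q1 q2. sweedler (S p) (\<lambda>a1 b1.
       sweedler q1 (\<lambda>a2 b2. sweedler q2 (\<lambda>u v. \<Phi> (a1 * (a2 * S v)) (b1 * (b2 * S u)))))))"
    by (intro sweedler_cong) (rule sweedler_swap)
  also have "\<dots> = sweedler x (\<lambda>p q. sweedler p (\<lambda>p1 p2. sweedler (S p1) (\<lambda>a1 b1.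
       sweedler p2 (\<lambda>a2 b2. sweedler q (\<lambda>u v. \<Phi> (a1 * a2 * S v) (b1 * b2 * S u))))))"
    unfolding mult.assoc by (rule sweedler_coassoc[symmetric]) (intro lin)+
  also have "\<dots> = sweedler x (\<lambda>p q. eps p * sweedler q (\<lambda>u v. \<Phi> (S v) (S u)))"
    by (intro sweedler_cong sweedler_antipode_mult_left[of "\<lambda>\<alpha> \<beta>. sweedler _ (\<lambda>u v. \<Phi> (\<alpha> * S v) (\<beta> * S u))",
          simplified]) (intro lin)+
  also have "\<dots> = sweedler x (\<lambda>u v. \<Phi> (S v) (S u))"
    by (rule sweedler_counit_left) (intro lin)+
  finally show ?thesis .
qed

lemma conv_antipode:
  "lfunc sc \<phi> \<Longrightarrow> lfunc sc \<psi> \<Longrightarrow> conv \<phi> \<psi> (S x) = conv (\<lambda>y. \<psi> (S y)) (\<lambda>y. \<phi> (S y)) x"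
  unfolding conv_def by (subst sweedler_antipode) (auto simp: bilin_form_mult mult.commute)

definition cnj_st :: "('a \<Rightarrow> complex) \<Rightarrow> 'a \<Rightarrow> complex" where
  "cnj_st \<phi> y = cnj (\<phi> (st y))"

lemma lfunc_cnj_st: "lfunc sc \<phi> \<Longrightarrow> lfunc sc (cnj_st \<phi>)"
  unfolding cnj_st_def[abs_def]
  by (rule lfuncI[OF vector_space_sc]) (simp_all add: st_add st_scale lfunc_add lfunc_scale)

lemma cnj_st_st: "cnj_st \<phi> (st x) = cnj (\<phi> x)"
  by (simp add: cnj_st_def st_st)

lemma cnj_st_cnj_st: "cnj_st (cnj_st \<phi>) = \<phi>"
  by (simp add: cnj_st_def st_st fun_eq_iff)

lemma sweedler_st_mult:
  "lfunc sc \<phi> \<Longrightarrow> lfunc sc \<psi> \<Longrightarrow>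
   sweedler (st x) (\<lambda>u v. \<phi> u * \<psi> v) = cnj (sweedler x (\<lambda>u v. cnj_st \<phi> u * cnj_st \<psi> v))"
  by (simp add: sweedler_st bilin_form_mult cnj_sweedler cnj_st_def st_st)

lemma eps_st: "eps (st x) = cnj (eps x)"
proof -
  have "conv (cnj_st eps) \<phi> = \<phi>" if \<phi>: "lfunc sc \<phi>" for \<phi>
  proof
    fix x
    have "cnj (\<phi> x) = sweedler (st x) (\<lambda>u v. eps u * cnj_st \<phi> v)"
      by (simp add: sweedler_counit_left lfunc_cnj_st \<phi> cnj_st_st)
    also have "\<dots> = cnj (conv (cnj_st eps) \<phi> x)"
      by (simp add: sweedler_st_mult lfunc_eps lfunc_cnj_st \<phi> conv_def cnj_st_cnj_st)
    finally show "conv (cnj_st eps) \<phi> x = \<phi> x" by simp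
  qed
  then have "cnj_st eps = eps"
    using conv_eps_right[OF lfunc_cnj_st[OF lfunc_eps]] lfunc_eps by metis
  then show ?thesis by (metis cnj_st_st)
qed

text \<open>The involution of the dual Hopf algebra.\<close>

definition dual_star :: "('a \<Rightarrow> complex) \<Rightarrow> 'a \<Rightarrow> complex" where
  "dual_star \<phi> x = cnj (\<phi> (st (S x)))"

lemma lfunc_dual_star: "lfunc sc \<phi> \<Longrightarrow> lfunc sc (dual_star \<phi>)"
  using lfunc_S_arg[OF lfunc_cnj_st] by (simp add: dual_star_def[abs_def] cnj_st_def)

lemma dual_star_conv:
  assumes "lfunc sc \<phi>" "lfunc sc \<psi>"
  shows "dual_star (conv \<phi> \<psi>) = conv (dual_star \<psi>) (dual_star \<phi>)"
proof
  fix x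
  have "dual_star (conv \<phi> \<psi>) x = conv (cnj_st \<phi>) (cnj_st \<psi>) (S x)"
    by (simp add: dual_star_def conv_def sweedler_st_mult assms)
  also have "\<dots> = conv (dual_star \<psi>) (dual_star \<phi>) x"
    by (simp add: conv_antipode lfunc_cnj_st assms) (simp add: dual_star_def[abs_def] cnj_st_def)
  finally show "dual_star (conv \<phi> \<psi>) x = conv (dual_star \<psi>) (dual_star \<phi>) x" .
qed

section \<open>Homogeneous spaces\<close>

lemma hom_space_iff:
  "a \<in> hom_space sc cop sk s \<longleftrightarrow>
   (\<forall>f \<phi>. lfunc sc f \<longrightarrow> lfunc sk \<phi> \<longrightarrow> conv f (\<lambda>y. \<phi> (s y)) a = f a * \<phi> (s 1))"
  unfolding hom_space_def teq2_def conv_def sweedler_def by (simp add: split_def o_def) blast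

lemma cop_rtransl:
  assumes "lfunc sc \<chi>" and "teq2 sc sc (cop b) l"
  shows "teq2 sc sc (cop (rtransl \<chi> b)) (map (\<lambda>(u,v). (u, rtransl \<chi> v)) l)"
  unfolding teq2_def
proof (intro allI impI)
  fix f f' assume ff: "lfunc sc f \<and> lfunc sc f'"
  have "(\<Sum>(u,v)\<leftarrow>cop (rtransl \<chi> b). f u * f' v) = conv f (\<lambda>y. f' (rtransl \<chi> y)) b"
    using conv_rtransl[of f f' \<chi> b] ff assms(1) by (simp add: conv_def sweedler_def)
  also have "\<dots> = (\<Sum>(u,v)\<leftarrow>l. f u * f' (rtransl \<chi> v))"
    unfolding conv_def sweedler_def
    by (rule teq2D[OF assms(2)]) (use ff lfunc_compose linear_rtransl[OF assms(1)] in blast)+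
  finally show "(\<Sum>(u,v)\<leftarrow>cop (rtransl \<chi> b). f u * f' v) = (\<Sum>(u,v)\<leftarrow>map (\<lambda>(u,v). (u, rtransl \<chi> v)) l. f u * f' v)"
    by (simp add: split_def o_def)
qed

text \<open>The homogeneous space is cut out by the functionals y \<mapsto> conv f (\<phi> \<circ> s) y - f y \<phi> (s 1),
  and by coassociativity these annihilate the right legs of \<Delta> b.\<close>

lemma hom_space_left_coideal:
  assumes s: "Vector_Spaces.linear sc sk s" and b: "b \<in> hom_space sc cop sk s"
  shows "\<exists>l. teq2 sc sc (cop b) l \<and> (\<forall>(u,v)\<in>set l. v \<in> hom_space sc cop sk s)"
proof -
  define Ts where "Ts = {\<tau>. \<exists>f \<phi>. lfunc sc f \<and> lfunc sk \<phi> \<and>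
      \<tau> = (\<lambda>y. conv f (\<lambda>z. \<phi> (s z)) y - f y * \<phi> (s 1))}"
  have Ts: "lfunc sc \<tau>" if "\<tau> \<in> Ts" for \<tau>
    using that lfunc_compose[OF _ s] unfolding Ts_def by (auto intro!: lfunc_minus lfunc_multc lfunc_conv)
  have "(\<Sum>(a,c)\<leftarrow>cop b. f0 a * \<tau> c) = 0" if f0: "lfunc sc f0" and \<tau>: "\<tau> \<in> Ts" for f0 \<tau>
  proof -
    obtain f \<phi> where f: "lfunc sc f" and \<phi>: "lfunc sk \<phi>"
      and \<tau>_eq: "\<tau> = (\<lambda>y. conv f (\<lambda>z. \<phi> (s z)) y - f y * \<phi> (s 1))"
      using \<tau> unfolding Ts_def by blast
    have "(\<Sum>(a,c)\<leftarrow>cop b. f0 a * \<tau> c) = conv f0 (conv f (\<lambda>z. \<phi> (s z))) b - conv f0 f b * \<phi> (s 1)"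
      by (simp add: \<tau>_eq conv_def sweedler_def split_def right_diff_distrib sum_list_subtractf
          sum_list_mult_const mult.assoc[symmetric])
    also have "conv f0 (conv f (\<lambda>z. \<phi> (s z))) b = conv (conv f0 f) (\<lambda>z. \<phi> (s z)) b"
      by (simp add: conv_assoc f0 f lfunc_compose[OF \<phi> s])
    also have "\<dots> = conv f0 f b * \<phi> (s 1)"
      using b lfunc_conv[OF f0 f] \<phi> unfolding hom_space_iff by blast
    finally show ?thesis by simp
  qed
  then obtain l where l: "teq2 sc sc (cop b) l" "\<forall>(a,c)\<in>set l. \<forall>\<tau>\<in>Ts. \<tau> c = 0"
    using teq2_annihilated_right[OF vector_space_sc vector_space_sc Ts] by blast
  have "v \<in> hom_space sc cop sk s" if "(u, v) \<in> set l" for u v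
    unfolding hom_space_iff
  proof (intro allI impI)
    fix f \<phi> assume "lfunc sc f" "lfunc sk \<phi>"
    then have "(\<lambda>y. conv f (\<lambda>z. \<phi> (s z)) y - f y * \<phi> (s 1)) \<in> Ts" unfolding Ts_def by blast
    then show "conv f (\<lambda>z. \<phi> (s z)) v = f v * \<phi> (s 1)" using l(2) that by fastforce
  qed
  then show ?thesis using l(1) by blast
qed

end

section \<open>The adjoint action of a character\<close>

locale real_qgroup_character = real_qgroup +
  fixes g :: "'a \<Rightarrow> complex"
  assumes character: "character sc st g"
begin

lemma mult_functional_g: "mult_functional g"
  using character by (simp add: character_def mult_functional_def)

lemma lfunc_g: "lfunc sc g"
  using character by (simp add: character_def)

lemma g_st: "g (st x) = cnj (g x)"
  using character by (simp add: character_def)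

definition g_inv :: "'a \<Rightarrow> complex" where
  "g_inv x = g (S x)"

lemma mult_functional_g_inv: "mult_functional g_inv"
  unfolding g_inv_def[abs_def] by (rule mult_functional_antipode[OF mult_functional_g])

lemma lfunc_g_inv: "lfunc sc g_inv"
  by (rule mult_functional_lfunc[OF mult_functional_g_inv])

lemma conv_g_g_inv: "conv g g_inv = eps" and conv_g_inv_g: "conv g_inv g = eps"
  unfolding g_inv_def[abs_def]
  by (rule conv_antipode_right[OF mult_functional_g] conv_antipode_left[OF mult_functional_g])+

lemma
  assumes "lfunc sc \<phi>"
  shows conv_g_g_inv_cancel: "conv g (conv g_inv \<phi>) = \<phi>"
    and conv_g_inv_g_cancel: "conv g_inv (conv g \<phi>) = \<phi>"
  using assms
  by (simp_all add: conv_assoc[symmetric] conv_assoc lfunc_g lfunc_g_inv conv_g_g_inv conv_g_inv_g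
      conv_eps_left conv_eps_right)

text \<open>Because g is a *-character, y \<mapsto> cnj (g (S (st y))) is a left convolution inverse of g.\<close>

lemma g_inv_st: "cnj (g (S (st y))) = g_inv y"
proof -
  have "conv (cnj_st g_inv) g = eps"
  proof
    fix x
    have "eps (st x) = conv g_inv g (st x)" by (simp add: conv_g_inv_g)
    also have "\<dots> = cnj (conv (cnj_st g_inv) g x)"
      by (simp add: conv_def sweedler_st_mult lfunc_g lfunc_g_inv cnj_st_def g_st)
    finally show "conv (cnj_st g_inv) g x = eps x" by (simp add: eps_st)
  qed
  then have "cnj_st g_inv = g_inv"
    by (intro conv_inverse_unique[OF lfunc_cnj_st[OF lfunc_g_inv] lfunc_g lfunc_g_inv] conv_g_g_inv)
  then show ?thesis by (metis cnj_st_def g_inv_def)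
qed

lemma dual_star_g: "dual_star g = g_inv"
  by (simp add: dual_star_def g_st g_inv_def fun_eq_iff)

lemma dual_star_g_inv: "dual_star g_inv = g"
proof
  fix x
  have "dual_star g_inv x = cnj (g (S (st (S x))))" by (simp add: dual_star_def g_inv_def)
  also have "\<dots> = g_inv (S x)" by (rule g_inv_st)
  also have "\<dots> = g x"
    unfolding g_inv_def by (rule mult_functional_antipode_antipode[OF mult_functional_g])
  finally show "dual_star g_inv x = g x" .
qed

abbreviation Ad_g :: "'a \<Rightarrow> 'a" where
  "Ad_g \<equiv> Ad sc cop S g"

lemma functional_Ad: "lfunc sc h \<Longrightarrow> h (Ad_g x) = conv (conv g_inv h) g x"
  by (simp add: Ad_def conv_def g_inv_def sweedler_legs lfunc_sum_list lfunc_scale sweedler_multc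
      sweedler_cmult mult_ac)

text \<open>The inverse of the adjoint action is the adjoint action of the convolution inverse
  of g, realised as a composite of translations.\<close>

definition Ad_inv :: "'a \<Rightarrow> 'a" where
  "Ad_inv x = ltransl g (rtransl g_inv x)"

lemma functional_Ad_inv: "lfunc sc h \<Longrightarrow> h (Ad_inv x) = conv (conv g h) g_inv x"
  by (simp add: Ad_inv_def functional_ltransl functional_rtransl lfunc_conv lfunc_g lfunc_g_inv conv_assoc)

lemma Ad_Ad_inv: "Ad_g (Ad_inv x) = x"
  by (rule eq_by_lfunc)
    (simp add: functional_Ad functional_Ad_inv lfunc_conv lfunc_g lfunc_g_inv conv_assoc
      conv_g_g_inv conv_eps_right conv_g_g_inv_cancel conv_g_inv_g_cancel)

lemma Ad_inv_Ad: "Ad_inv (Ad_g x) = x"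
  by (rule eq_by_lfunc)
    (simp add: functional_Ad functional_Ad_inv lfunc_conv lfunc_g lfunc_g_inv conv_assoc
      conv_g_inv_g conv_eps_right conv_g_g_inv_cancel conv_g_inv_g_cancel)

lemma inv_Ad: "inv Ad_g = Ad_inv"
  by (rule inv_equality) (simp_all add: Ad_Ad_inv Ad_inv_Ad)

lemma linear_Ad: "Vector_Spaces.linear sc sc Ad_g"
  by (rule linear_by_lfunc) (simp add: functional_Ad lfunc_conv lfunc_g lfunc_g_inv)

lemma linear_Ad_inv: "Vector_Spaces.linear sc sc Ad_inv"
  by (rule linear_by_lfunc) (simp add: functional_Ad_inv lfunc_conv lfunc_g lfunc_g_inv)

lemma Ad_inv_mult: "Ad_inv (x * y) = Ad_inv x * Ad_inv y"
  by (simp add: Ad_inv_def rtransl_mult ltransl_mult mult_functional_g mult_functional_g_inv)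

lemma Ad_inv_one: "Ad_inv 1 = 1"
  by (simp add: Ad_inv_def rtransl_one ltransl_one lfunc_g lfunc_g_inv
      mult_functional_one[OF mult_functional_g] mult_functional_one[OF mult_functional_g_inv])

lemma eps_Ad_inv: "eps (Ad_inv x) = eps x"
  by (simp add: functional_Ad_inv lfunc_eps lfunc_g conv_eps_right conv_g_g_inv)

text \<open>Ad_g and its inverse are coalgebra maps, because g and g_inv are mutually inverse
  for convolution.\<close>

lemma
  assumes "lfunc sc \<phi>" "lfunc sc \<psi>"
  shows conv_Ad_inv: "conv \<phi> \<psi> (Ad_inv x) = conv (\<lambda>y. \<phi> (Ad_inv y)) (\<lambda>y. \<psi> (Ad_inv y)) x"
    and conv_Ad: "conv \<phi> \<psi> (Ad_g x) = conv (\<lambda>y. \<phi> (Ad_g y)) (\<lambda>y. \<psi> (Ad_g y)) x"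
proof -
  have "(\<lambda>y. \<phi> (Ad_inv y)) = conv (conv g \<phi>) g_inv" "(\<lambda>y. \<psi> (Ad_inv y)) = conv (conv g \<psi>) g_inv"
    by (simp_all add: functional_Ad_inv assms fun_eq_iff)
  then show "conv \<phi> \<psi> (Ad_inv x) = conv (\<lambda>y. \<phi> (Ad_inv y)) (\<lambda>y. \<psi> (Ad_inv y)) x"
    using assms by (simp add: functional_Ad_inv lfunc_conv lfunc_g lfunc_g_inv conv_assoc
        conv_g_inv_g_cancel)
  have "(\<lambda>y. \<phi> (Ad_g y)) = conv (conv g_inv \<phi>) g" "(\<lambda>y. \<psi> (Ad_g y)) = conv (conv g_inv \<psi>) g"
    by (simp_all add: functional_Ad assms fun_eq_iff)
  then show "conv \<phi> \<psi> (Ad_g x) = conv (\<lambda>y. \<phi> (Ad_g y)) (\<lambda>y. \<psi> (Ad_g y)) x"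
    using assms by (simp add: functional_Ad lfunc_conv lfunc_g lfunc_g_inv conv_assoc
        conv_g_g_inv_cancel)
qed

lemma tau_Ad_inv: "tau st S (Ad_inv x) = Ad_inv (tau st S x)"
proof (rule eq_by_lfunc)
  fix h assume h: "lfunc sc h"
  have tau: "\<chi> (tau st S y) = cnj (dual_star \<chi> y)" for \<chi> y by (simp add: dual_star_def tau_def)
  have "h (Ad_inv (tau st S x)) = cnj (dual_star (conv (conv g h) g_inv) x)"
    by (simp add: functional_Ad_inv[OF h] tau)
  also have "dual_star (conv (conv g h) g_inv) = conv g (conv (dual_star h) g_inv)"
    by (simp add: dual_star_conv lfunc_conv lfunc_g lfunc_g_inv h dual_star_g dual_star_g_inv
        lfunc_dual_star conv_assoc)
  also have "conv g (conv (dual_star h) g_inv) x = dual_star h (Ad_inv x)"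
    by (simp add: functional_Ad_inv lfunc_dual_star h lfunc_g lfunc_g_inv conv_assoc)
  finally show "h (tau st S (Ad_inv x)) = h (Ad_inv (tau st S x))" by (simp add: tau)
qed

end

section \<open>The conjugated coisotropic subgroup\<close>

locale real_qgroup_coisotropic = real_qgroup_character sc st cop eps S g
  for sc :: "complex \<Rightarrow> 'a::ring_1 \<Rightarrow> 'a" and st cop eps S g +
  fixes scK :: "complex \<Rightarrow> 'k::ab_group_add \<Rightarrow> 'k" and copK :: "'k \<Rightarrow> ('k \<times> 'k) list"
    and epsK :: "'k \<Rightarrow> complex" and act :: "'k \<Rightarrow> 'a \<Rightarrow> 'k" and tauK :: "'k \<Rightarrow> 'k"
    and r :: "'a \<Rightarrow> 'k"
  assumes coisotropic: "real_coisotropic_right_qsubgroup sc st cop eps S scK copK epsK act tauK r"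
begin

lemma
  shows coalgebra_K: "coalgebra scK copK epsK"
    and linear_act_left: "Vector_Spaces.linear scK scK (\<lambda>k. act k a)"
    and linear_act_right: "Vector_Spaces.linear sc scK (act k)"
    and act_one: "act k 1 = k"
    and act_act: "act (act k a) b = act k (a * b)"
    and linear_r: "Vector_Spaces.linear sc scK r"
    and surj_r: "surj r"
    and copK_r: "teq2 scK scK (copK (r x)) (map (\<lambda>(u,v). (r u, r v)) (cop x))"
    and epsK_r: "epsK (r x) = eps x"
    and r_mult: "r (x * y) = act (r x) y"
    and tauK_add: "tauK (k + l) = tauK k + tauK l"
    and tauK_scale: "tauK (scK c k) = scK (cnj c) (tauK k)"
    and tauK_r: "tauK (r x) = r (tau st S x)"
  using coisotropic unfolding real_coisotropic_right_qsubgroup_def by simp_all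

lemma copK_0: "teq2 scK scK (copK 0) []"
  unfolding teq2_def
proof (intro allI impI)
  fix f h :: "'k \<Rightarrow> complex"
  assume fh: "lfunc scK f \<and> lfunc scK h"
  have "teq2 scK scK (copK (0 + 0)) (copK 0 @ copK 0)"
    using coalgebra_K unfolding coalgebra_def by blast
  then have "(\<Sum>(a,b)\<leftarrow>copK 0. f a * h b) = (\<Sum>(a,b)\<leftarrow>copK 0 @ copK 0. f a * h b)"
    using teq2D fh by fastforce
  then show "(\<Sum>(a,b)\<leftarrow>copK 0. f a * h b) = (\<Sum>(a,b)\<leftarrow>[]. f a * h b)" by simp
qed

lemma lfunc_compose_r: "lfunc scK \<phi> \<Longrightarrow> lfunc sc (\<lambda>y. \<phi> (r y))"
  by (rule lfunc_compose[OF _ linear_r])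

definition r_g :: "'a \<Rightarrow> 'k" where
  "r_g x = r (Ad_inv x)"

lemma r_inv_Ad: "(\<lambda>x. r (inv Ad_g x)) = r_g"
  by (simp add: inv_Ad r_g_def[abs_def])

lemma linear_r_g: "Vector_Spaces.linear sc scK r_g"
  using Vector_Spaces.linear_compose[OF linear_Ad_inv linear_r] by (simp add: r_g_def[abs_def] o_def)

lemma r_g_one: "r_g 1 = r 1"
  by (simp add: r_g_def Ad_inv_one)

lemma ker_r_g: "ker r_g = Ad_g ` ker r"
proof
  show "ker r_g \<subseteq> Ad_g ` ker r"
  proof
    fix x assume "x \<in> ker r_g"
    then have "Ad_inv x \<in> ker r" by (simp add: ker_def r_g_def)
    then show "x \<in> Ad_g ` ker r" using Ad_Ad_inv[of x] by (metis image_eqI)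
  qed
  show "Ad_g ` ker r \<subseteq> ker r_g"
    by (auto simp: ker_def r_g_def Ad_inv_Ad)
qed

lemma tau_ker_r_g: "tau st S ` ker r_g \<subseteq> ker r_g"
proof
  fix z assume "z \<in> tau st S ` ker r_g"
  then obtain x where x: "r (Ad_inv x) = 0" "z = tau st S x" by (auto simp: ker_def r_g_def)
  have "r_g z = tauK (r (Ad_inv x))" by (simp add: x(2) r_g_def tau_Ad_inv tauK_r)
  also have "\<dots> = 0" using tauK_add[of 0 0] by (simp add: x(1))
  finally show "z \<in> ker r_g" by (simp add: ker_def)
qed

lemma cspace_ker:
  assumes "Vector_Spaces.linear sc s f"
  shows "cspace sc (ker f)"
proof -
  interpret vector_space s using assms by (simp add: Vector_Spaces.linear_iff)
  show ?thesis using assms by (simp add: cspace_def ker_def linear_map_0 linear_map_add linear_map_scale)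
qed

lemma right_ideal_ker_r_g: "right_ideal sc (ker r_g)"
  unfolding right_ideal_def
proof (intro conjI ballI allI)
  show "cspace sc (ker r_g)" by (rule cspace_ker[OF linear_r_g])
  fix x y assume "x \<in> ker r_g"
  then show "x * y \<in> ker r_g"
    by (simp add: ker_def r_g_def Ad_inv_mult r_mult linear_map_0[OF linear_act_left])
qed

text \<open>If r_g x = 0 then (r \<otimes> r) \<Delta> (Ad_inv x) = 0, so \<Delta> (Ad_inv x) splits along ker r;
  applying the coalgebra map Ad_g to both legs splits \<Delta> x along ker r_g.\<close>

lemma two_sided_coideal_ker_r_g: "two_sided_coideal sc cop eps (ker r_g)"
  unfolding two_sided_coideal_def
proof (intro conjI ballI)
  show "cspace sc (ker r_g)" by (rule cspace_ker[OF linear_r_g])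
  fix x assume "x \<in> ker r_g"
  then have r0: "r (Ad_inv x) = 0" by (simp add: ker_def r_g_def)
  show "eps x = 0"
    using r0 eps_Ad_inv[of x] epsK_r[of "Ad_inv x"] linear_map_0[OF linear_r]
    by (metis lfunc_0 coalgebra_K coalgebra_def)
  have "teq2 scK scK (map (\<lambda>(u,v). (r u, r v)) (cop (Ad_inv x))) []"
    using teq2_trans[OF teq2_sym[OF copK_r[of "Ad_inv x"]]] copK_0 r0 by simp
  then obtain l where l: "teq2 sc sc (cop (Ad_inv x)) l" "\<forall>(a,b)\<in>set l. r a = 0 \<or> r b = 0"
    by (rule teq2_kernel_split[OF vector_space_sc linear_r])
  have "teq2 sc sc (cop x) (map (\<lambda>(u,v). (Ad_g u, Ad_g v)) l)"
    unfolding teq2_def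
  proof (intro allI impI)
    fix f f' assume ff: "lfunc sc f \<and> lfunc sc f'"
    then have lA: "lfunc sc (\<lambda>y. f (Ad_g y))" "lfunc sc (\<lambda>y. f' (Ad_g y))"
      using lfunc_compose linear_Ad by blast+
    have "(\<Sum>(u,v)\<leftarrow>cop x. f u * f' v) = conv (\<lambda>y. f (Ad_g y)) (\<lambda>y. f' (Ad_g y)) (Ad_inv x)"
      using conv_Ad[of f f' "Ad_inv x"] ff by (simp add: Ad_Ad_inv conv_def sweedler_def)
    also have "\<dots> = (\<Sum>(u,v)\<leftarrow>l. f (Ad_g u) * f' (Ad_g v))"
      unfolding conv_def sweedler_def by (rule teq2D[OF l(1) lA])
    finally show "(\<Sum>(u,v)\<leftarrow>cop x. f u * f' v) = (\<Sum>(u,v)\<leftarrow>map (\<lambda>(u,v). (Ad_g u, Ad_g v)) l. f u * f' v)"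
      by (simp add: split_def o_def)
  qed
  moreover have "\<forall>(u,v)\<in>set (map (\<lambda>(u,v). (Ad_g u, Ad_g v)) l). u \<in> ker r_g \<or> v \<in> ker r_g"
    using l(2) by (auto simp: ker_def r_g_def Ad_inv_Ad)
  ultimately show "\<exists>l. teq2 sc sc (cop x) l \<and> (\<forall>(u,v)\<in>set l. u \<in> ker r_g \<or> v \<in> ker r_g)"
    by blast
qed

lemma copK_r_g: "teq2 scK scK (copK (r_g x)) (map (\<lambda>(u,v). (r_g u, r_g v)) (cop x))"
  unfolding teq2_def
proof (intro allI impI)
  fix \<phi> \<psi> assume \<phi>\<psi>: "lfunc scK \<phi> \<and> lfunc scK \<psi>"
  then have l: "lfunc sc (\<lambda>y. \<phi> (r y))" "lfunc sc (\<lambda>y. \<psi> (r y))" using lfunc_compose_r by blast+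
  have "(\<Sum>(a,b)\<leftarrow>copK (r_g x). \<phi> a * \<psi> b) = conv (\<lambda>y. \<phi> (r y)) (\<lambda>y. \<psi> (r y)) (Ad_inv x)"
    using teq2D[OF copK_r[of "Ad_inv x"]] \<phi>\<psi>
    by (simp add: r_g_def conv_def sweedler_def split_def o_def)
  also have "\<dots> = (\<Sum>(a,b)\<leftarrow>map (\<lambda>(u,v). (r_g u, r_g v)) (cop x). \<phi> a * \<psi> b)"
    by (subst conv_Ad_inv[OF l]) (simp add: conv_def sweedler_def split_def o_def r_g_def)
  finally show "(\<Sum>(a,b)\<leftarrow>copK (r_g x). \<phi> a * \<psi> b) = (\<Sum>(a,b)\<leftarrow>map (\<lambda>(u,v). (r_g u, r_g v)) (cop x). \<phi> a * \<psi> b)" .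
qed

lemma coisotropic_r_g:
  "real_coisotropic_right_qsubgroup sc st cop eps S scK copK epsK (\<lambda>k a. act k (Ad_inv a)) tauK r_g"
  unfolding real_coisotropic_right_qsubgroup_def
proof (intro conjI allI)
  show "surj r_g"
    by (metis surj_r surj_def r_g_def Ad_inv_Ad)
  show "Vector_Spaces.linear sc scK (\<lambda>a. act k (Ad_inv a))" for k
    using Vector_Spaces.linear_compose[OF linear_Ad_inv linear_act_right] by (simp add: o_def)
  show "teq2 scK scK (copK (r_g x)) (map (\<lambda>(u,v). (r_g u, r_g v)) (cop x))" for x
    by (rule copK_r_g)
qed (simp_all add: coalgebra_K linear_act_left act_one act_act Ad_inv_one Ad_inv_mult linear_r_g
    r_g_def epsK_r eps_Ad_inv r_mult tauK_add tauK_scale tauK_r tau_Ad_inv)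

lemma hom_space_r_g_iff: "a \<in> hom_space sc cop scK r_g \<longleftrightarrow> Ad_inv a \<in> hom_space sc cop scK r"
proof
  assume a: "a \<in> hom_space sc cop scK r_g"
  show "Ad_inv a \<in> hom_space sc cop scK r"
    unfolding hom_space_iff
  proof (intro allI impI)
    fix f \<phi> assume f: "lfunc sc f" and \<phi>: "lfunc scK \<phi>"
    have "conv f (\<lambda>y. \<phi> (r y)) (Ad_inv a) = conv (\<lambda>y. f (Ad_inv y)) (\<lambda>y. \<phi> (r_g y)) a"
      unfolding r_g_def by (rule conv_Ad_inv[OF f lfunc_compose_r[OF \<phi>]])
    also have "\<dots> = f (Ad_inv a) * \<phi> (r 1)"
      using a lfunc_compose[OF f linear_Ad_inv] \<phi> unfolding hom_space_iff by (simp add: r_g_one)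
    finally show "conv f (\<lambda>y. \<phi> (r y)) (Ad_inv a) = f (Ad_inv a) * \<phi> (r 1)" .
  qed
next
  assume a: "Ad_inv a \<in> hom_space sc cop scK r"
  show "a \<in> hom_space sc cop scK r_g"
    unfolding hom_space_iff
  proof (intro allI impI)
    fix f \<phi> assume f: "lfunc sc f" and \<phi>: "lfunc scK \<phi>"
    have "conv f (\<lambda>y. \<phi> (r_g y)) a = conv (\<lambda>y. f (Ad_g (Ad_inv y))) (\<lambda>y. \<phi> (r (Ad_inv y))) a"
      by (simp add: Ad_Ad_inv r_g_def)
    also have "\<dots> = conv (\<lambda>y. f (Ad_g y)) (\<lambda>y. \<phi> (r y)) (Ad_inv a)"
      by (rule conv_Ad_inv[symmetric, OF lfunc_compose[OF f linear_Ad] lfunc_compose_r[OF \<phi>]])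
    also have "\<dots> = f a * \<phi> (r_g 1)"
      using a lfunc_compose[OF f linear_Ad] \<phi> unfolding hom_space_iff by (simp add: Ad_Ad_inv r_g_one)
    finally show "conv f (\<lambda>y. \<phi> (r_g y)) a = f a * \<phi> (r_g 1)" .
  qed
qed

lemma hom_space_r_g: "hom_space sc cop scK r_g = Ad_g ` hom_space sc cop scK r"
proof
  show "hom_space sc cop scK r_g \<subseteq> Ad_g ` hom_space sc cop scK r"
  proof
    fix a assume "a \<in> hom_space sc cop scK r_g"
    then have "Ad_inv a \<in> hom_space sc cop scK r" by (simp add: hom_space_r_g_iff)
    then show "a \<in> Ad_g ` hom_space sc cop scK r" using Ad_Ad_inv[of a] by (metis image_eqI)
  qed
  show "Ad_g ` hom_space sc cop scK r \<subseteq> hom_space sc cop scK r_g"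
    by (auto simp: hom_space_r_g_iff Ad_inv_Ad)
qed

lemma rtransl_g_hom_space:
  assumes b: "b \<in> hom_space sc cop scK r"
  shows "rtransl g b \<in> hom_space sc cop scK r_g"
  unfolding hom_space_iff
proof (intro allI impI)
  fix f \<phi> assume f: "lfunc sc f" and \<phi>: "lfunc scK \<phi>"
  note \<phi>r = lfunc_compose_r[OF \<phi>]
  have \<phi>r_g: "(\<lambda>y. \<phi> (r_g y)) = conv (conv g (\<lambda>y. \<phi> (r y))) g_inv"
    unfolding r_g_def by (intro ext functional_Ad_inv \<phi>r)
  have "conv f (\<lambda>y. \<phi> (r_g y)) (rtransl g b) = conv (conv f g) (\<lambda>y. \<phi> (r y)) b"
    by (simp add: \<phi>r_g functional_rtransl f \<phi>r lfunc_conv lfunc_g lfunc_g_inv conv_assoc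
        conv_g_inv_g conv_g_g_inv conv_eps_right conv_g_inv_g_cancel conv_g_g_inv_cancel)
  also have "\<dots> = f (rtransl g b) * \<phi> (r_g 1)"
    using b lfunc_conv[OF f lfunc_g] \<phi> unfolding hom_space_iff by (simp add: functional_rtransl f r_g_one)
  finally show "conv f (\<lambda>y. \<phi> (r_g y)) (rtransl g b) = f (rtransl g b) * \<phi> (r_g 1)" .
qed

lemma rtransl_g_inv_hom_space:
  assumes a: "a \<in> hom_space sc cop scK r_g"
  shows "rtransl g_inv a \<in> hom_space sc cop scK r"
  unfolding hom_space_iff
proof (intro allI impI)
  fix f \<phi> assume f: "lfunc sc f" and \<phi>: "lfunc scK \<phi>"
  note \<phi>r = lfunc_compose_r[OF \<phi>]
  have \<phi>r_g: "(\<lambda>y. \<phi> (r_g y)) = conv (conv g (\<lambda>y. \<phi> (r y))) g_inv"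
    unfolding r_g_def by (intro ext functional_Ad_inv \<phi>r)
  have "conv f (\<lambda>y. \<phi> (r y)) (rtransl g_inv a) = conv (conv f g_inv) (\<lambda>y. \<phi> (r_g y)) a"
    by (simp add: \<phi>r_g functional_rtransl f \<phi>r lfunc_conv lfunc_g lfunc_g_inv conv_assoc
        conv_g_inv_g conv_g_g_inv conv_eps_right conv_g_inv_g_cancel conv_g_g_inv_cancel)
  also have "\<dots> = f (rtransl g_inv a) * \<phi> (r 1)"
    using a lfunc_conv[OF f lfunc_g_inv] \<phi> unfolding hom_space_iff
    by (simp add: functional_rtransl f r_g_one)
  finally show "conv f (\<lambda>y. \<phi> (r y)) (rtransl g_inv a) = f (rtransl g_inv a) * \<phi> (r 1)" .
qed

lemma
  shows rtransl_g_g_inv: "rtransl g (rtransl g_inv x) = x"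
    and rtransl_g_inv_g: "rtransl g_inv (rtransl g x) = x"
  by (simp_all add: rtransl_rtransl lfunc_g lfunc_g_inv conv_g_g_inv conv_g_inv_g rtransl_eps)

text \<open>Ad_g is not left colinear; the isomorphism is the right translation by g.\<close>

lemma left_comod_alg_iso_rtransl:
  "left_comod_alg_iso sc cop (hom_space sc cop scK r) (hom_space sc cop scK r_g) (rtransl g)"
  unfolding left_comod_alg_iso_def
proof (intro conjI ballI allI)
  show "bij_betw (rtransl g) (hom_space sc cop scK r) (hom_space sc cop scK r_g)"
    by (rule bij_betw_byWitness[where f' = "rtransl g_inv"])
      (auto simp: rtransl_g_g_inv rtransl_g_inv_g rtransl_g_hom_space rtransl_g_inv_hom_space)
  show "rtransl g (x + y) = rtransl g x + rtransl g y" for x y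
    by (rule linear_map_add[OF linear_rtransl[OF lfunc_g]])
  show "rtransl g (sc c x) = sc c (rtransl g x)" for c x
    by (rule linear_map_scale[OF linear_rtransl[OF lfunc_g]])
  show "rtransl g (x * y) = rtransl g x * rtransl g y" for x y
    by (rule rtransl_mult[OF mult_functional_g])
  show "rtransl g 1 = 1"
    by (rule rtransl_one[OF lfunc_g mult_functional_one[OF mult_functional_g]])
  fix b assume "b \<in> hom_space sc cop scK r"
  then obtain l where "teq2 sc sc (cop b) l" "\<forall>(u,v)\<in>set l. v \<in> hom_space sc cop scK r"
    using hom_space_left_coideal[OF linear_r] by blast
  then show "\<exists>l. teq2 sc sc (cop b) l \<and> (\<forall>(u,v)\<in>set l. v \<in> hom_space sc cop scK r) \<and>
      teq2 sc sc (cop (rtransl g b)) (map (\<lambda>(u,v). (u, rtransl g v)) l)"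
    using cop_rtransl[OF lfunc_g] by blast
qed

end

theorem proposition3:
  fixes sc :: "complex \<Rightarrow> 'a::ring_1 \<Rightarrow> 'a" and st :: "'a \<Rightarrow> 'a"
    and cop :: "'a \<Rightarrow> ('a \<times> 'a) list" and eps :: "'a \<Rightarrow> complex" and S :: "'a \<Rightarrow> 'a"
    and g :: "'a \<Rightarrow> complex"
    and scK :: "complex \<Rightarrow> 'k::ab_group_add \<Rightarrow> 'k" and copK :: "'k \<Rightarrow> ('k \<times> 'k) list"
    and epsK :: "'k \<Rightarrow> complex" and act :: "'k \<Rightarrow> 'a \<Rightarrow> 'k" and tauK :: "'k \<Rightarrow> 'k"
    and r :: "'a \<Rightarrow> 'k"
  defines "rg \<equiv> (\<lambda>x. r (inv (Ad sc cop S g) x))"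
  assumes "real_quantum_group sc st cop eps S"
    and "character sc st g"
    and "real_coisotropic_right_qsubgroup sc st cop eps S scK copK epsK act tauK r"
  shows "ker rg = Ad sc cop S g ` ker r
    \<and> tau st S ` ker rg \<subseteq> ker rg
    \<and> right_ideal sc (ker rg)
    \<and> two_sided_coideal sc cop eps (ker rg)
    \<and> (\<exists>copK' epsK' act' tauK'.
          real_coisotropic_right_qsubgroup sc st cop eps S scK copK' epsK' act' tauK' rg)
    \<and> hom_space sc cop scK rg = Ad sc cop S g ` hom_space sc cop scK r
    \<and> (\<exists>phi. left_comod_alg_iso sc cop (hom_space sc cop scK r) (hom_space sc cop scK rg) phi)"
proof -
  interpret real_qgroup_coisotropic sc st cop eps S g scK copK epsK act tauK r
    using assms(2-4)
    by (simp add: real_qgroup_coisotropic_def real_qgroup_character_def real_qgroup_def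
        real_qgroup_character_axioms_def real_qgroup_coisotropic_axioms_def)
  have "rg = r_g" unfolding rg_def by (rule r_inv_Ad)
  then show ?thesis
    using ker_r_g tau_ker_r_g right_ideal_ker_r_g two_sided_coideal_ker_r_g coisotropic_r_g
      hom_space_r_g left_comod_alg_iso_rtransl by blast
qed

end
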